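(* Let $p\ge 0$, $q\ge 1$ be integers with $2p+q+2\ge 6$, and let $G=B'(p,q,p)$. If a graph $G'$ is $L$-cospectral with $G$, then the nonincreasing degree sequence of $G'$ equals that of $G$, namely $(p+q+1,\,p+q+1,\,2^{q},\,1^{2p})$.
   Context: Two graphs are $L$-cospectral if their Laplacian matrices $L=D-A$ have the same multiset of eigenvalues. In a degree sequence, a superscript indicates the number of repetitions. For integers $p,q,r\ge 0$, the binary star graph $B(p,q,r)$ is the simple graph on $p+q+r+2$ vertices $u,v,w_1,\dots,w_q,u_1,\dots,u_p,v_1,\dots,v_r$ whose edges are $uw_i$ and $vw_i$ for $1\le i\le q$, $uu_j$ for $1\le j\le p$, and $vv_k$ for $1\le k\le r$; $B'(p,q,r)$ is obtained from $B(p,q,r)$ by adding the edge $uv$. *)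

theory Defs
  imports "Jordan_Normal_Form.Char_Poly" "HOL-Computational_Algebra.Polynomial"
begin

definition simple_graph :: "nat \<Rightarrow> (nat \<Rightarrow> nat \<Rightarrow> bool) \<Rightarrow> bool" where
  "simple_graph n E \<longleftrightarrow> (\<forall>i j. E i j \<longrightarrow> i < n \<and> j < n \<and> i \<noteq> j \<and> E j i)"

definition degree :: "nat \<Rightarrow> (nat \<Rightarrow> nat \<Rightarrow> bool) \<Rightarrow> nat \<Rightarrow> nat" where
  "degree n E i = card {j. j < n \<and> E i j}"

definition laplacian :: "nat \<Rightarrow> (nat \<Rightarrow> nat \<Rightarrow> bool) \<Rightarrow> real mat" where
  "laplacian n E = mat n n (\<lambda>(i,j). (if i = j then real (degree n E i) else 0)
                                   - (if E i j then 1 else 0))"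

text \<open>Multiset of Laplacian eigenvalues (roots of the characteristic polynomial,
  with algebraic multiplicity; L is real symmetric, so all eigenvalues are real).\<close>
definition lap_spectrum :: "nat \<Rightarrow> (nat \<Rightarrow> nat \<Rightarrow> bool) \<Rightarrow> real multiset" where
  "lap_spectrum n E = proots (char_poly (laplacian n E))"

definition L_cospectral :: "nat \<Rightarrow> (nat \<Rightarrow> nat \<Rightarrow> bool) \<Rightarrow> nat \<Rightarrow> (nat \<Rightarrow> nat \<Rightarrow> bool) \<Rightarrow> bool" where
  "L_cospectral n E n' E' \<longleftrightarrow> lap_spectrum n E = lap_spectrum n' E'"

definition degree_sequence :: "nat \<Rightarrow> (nat \<Rightarrow> nat \<Rightarrow> bool) \<Rightarrow> nat list" where
  "degree_sequence n E = rev (sort (map (degree n E) [0..<n]))"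

text \<open>B(p,q,r) on vertices 0..p+q+r+1: u = 0, v = 1, w_i = 1+i (1 \<le> i \<le> q),
  u_j = q+1+j (1 \<le> j \<le> p), v_k = p+q+1+k (1 \<le> k \<le> r).\<close>
definition binary_star_edge :: "nat \<Rightarrow> nat \<Rightarrow> nat \<Rightarrow> nat \<Rightarrow> nat \<Rightarrow> bool" where
  "binary_star_edge p q r x y \<longleftrightarrow>
     (let isw = (\<lambda>z. 2 \<le> z \<and> z \<le> q + 1);
          isu = (\<lambda>z. q + 2 \<le> z \<and> z \<le> p + q + 1);
          isv = (\<lambda>z. p + q + 2 \<le> z \<and> z \<le> p + q + r + 1);
          e = (\<lambda>a b. (a = 0 \<and> isw b) \<or> (a = 1 \<and> isw b) \<or> (a = 0 \<and> isu b) \<or> (a = 1 \<and> isv b))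
      in e x y \<or> e y x)"

definition binary_star'_edge :: "nat \<Rightarrow> nat \<Rightarrow> nat \<Rightarrow> nat \<Rightarrow> nat \<Rightarrow> bool" where
  "binary_star'_edge p q r x y \<longleftrightarrow>
     binary_star_edge p q r x y \<or> (x = 0 \<and> y = 1) \<or> (x = 1 \<and> y = 0)"

end

theory Submission
  imports Defs "Jordan_Normal_Form.Schur_Decomposition"
begin

text \<open>
  The traces of L and L^2 are the sum of the degrees and the sum of d^2 + d, so a graph G' that
  is L-cospectral with G = B'(p,q,p) has the same order and the same first two degree moments
  as G. Write D = p + q + 1 and let t be the positive root of t^2 + (D - 2) t = q, so that
  0 < t \<le> 1. The eigenvector equations of G reduce to two quadratics in the eigenvalue, so
  every Laplacian eigenvalue of G is at most 2 or lies in [D + t, D + 2); and 0 is a simple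
  eigenvalue since G is connected. Consequently G' has no isolated vertex (it would make 0 a
  double eigenvalue), every degree d of G' satisfies d + 1 < D + 2 (the Rayleigh quotient of
  the star around a vertex of degree d is at least d + 1), and testing the Laplacian of G'
  with a vertex indicator against the spectral gap (2, D + t) gives (d - 2)(D + t - d) \<le> d.
  This leaves only the degrees 1, 2, D - 1 and D (and 3, 4 when D = 5), and the two moment
  equations, together with an edge count in the case D = 5, determine their multiplicities.
\<close>

section \<open>Orthogonal diagonalization of real symmetric matrices\<close>

lemma real_symmetric_complex_eigenvalue_real:
  fixes A :: "real mat"
  assumes A: "A \<in> carrier_mat n n" and sym: "transpose_mat A = A"
    and v: "v \<in> carrier_vec n" "v \<noteq> 0\<^sub>v n" and Av: "of_real_hom.mat_hom A *\<^sub>v v = z \<cdot>\<^sub>v v"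
  shows "cnj z = z"
proof -
  let ?Ac = "of_real_hom.mat_hom A :: complex mat"
  define s where "s = (\<Sum>i<n. cnj (v$i) * (?Ac *\<^sub>v v) $ i)"
  define c where "c = (\<Sum>i<n. cnj (v$i) * v $ i)"
  have s_eq: "s = z * c" unfolding s_def c_def Av using v
    by (auto simp: sum_distrib_left intro!: sum.cong)
  have s_entries: "s = (\<Sum>i<n. \<Sum>j<n. cnj (v$i) * of_real (A $$ (i,j)) * v$j)"
    unfolding s_def using v A
    by (auto simp: scalar_prod_def sum_distrib_left lessThan_atLeast0 mult.assoc intro!: sum.cong)
  have "cnj s = (\<Sum>i<n. \<Sum>j<n. v$i * of_real (A $$ (i,j)) * cnj (v$j))"
    unfolding s_entries by (simp add: cnj_sum)
  also have "\<dots> = (\<Sum>j<n. \<Sum>i<n. v$i * of_real (A $$ (i,j)) * cnj (v$j))"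
    by (rule sum.swap)
  also have "\<dots> = s" unfolding s_entries
  proof (intro sum.cong refl)
    fix j i assume "j \<in> {..<n}" "i \<in> {..<n}"
    then have "A $$ (i,j) = A $$ (j,i)" using sym A
      by (metis carrier_matD(1) carrier_matD(2) index_transpose_mat(1) lessThan_iff)
    then show "v$i * of_real (A $$ (i,j)) * cnj (v$j) = cnj (v$j) * of_real (A $$ (j,i)) * v$i"
      by simp
  qed
  finally have s_real: "cnj s = s" .
  have c_real: "cnj c = c" unfolding c_def by (simp add: cnj_sum mult.commute)
  have "c = of_real (\<Sum>i<n. (cmod (v$i))^2)"
    unfolding c_def of_real_sum by (intro sum.cong refl, subst complex_norm_square, simp add: mult.commute)
  moreover have "(\<Sum>i<n. (cmod (v$i))^2) \<noteq> 0"
  proof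
    assume "(\<Sum>i<n. (cmod (v$i))^2) = 0"
    then have "\<forall>i\<in>{..<n}. (cmod (v$i))^2 = 0" by (subst (asm) sum_nonneg_eq_0_iff) auto
    then have "v = 0\<^sub>v n" using v by (intro eq_vecI) auto
    with v show False by auto
  qed
  ultimately have "c \<noteq> 0" by (metis of_real_eq_0_iff)
  have "cnj z * c = z * c" using s_real c_real s_eq by (metis complex_cnj_mult)
  then show "cnj z = z" using \<open>c \<noteq> 0\<close> by simp
qed

lemma real_symmetric_mat_real_eigenvector:
  fixes A :: "real mat"
  assumes A: "A \<in> carrier_mat n n" and sym: "transpose_mat A = A" and n: "n > 0"
  shows "\<exists>e v. v \<in> carrier_vec n \<and> v \<noteq> 0\<^sub>v n \<and> A *\<^sub>v v = e \<cdot>\<^sub>v v"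
proof -
  define Ac :: "complex mat" where "Ac = of_real_hom.mat_hom A"
  have Ac: "Ac \<in> carrier_mat n n" using A unfolding Ac_def by auto
  have cp: "char_poly Ac = map_poly of_real (char_poly A)"
    unfolding Ac_def by (rule of_real_hom.char_poly_hom[OF A])
  have "Polynomial.degree (char_poly Ac) = n" using degree_monic_char_poly[OF Ac] by auto
  then have "\<not> constant (poly (char_poly Ac))" using n by (auto simp: constant_degree)
  then obtain z where z: "poly (char_poly Ac) z = 0" using fundamental_theorem_of_algebra by blast
  then have "eigenvalue Ac z" using eigenvalue_root_char_poly[OF Ac] by auto
  then obtain v where "eigenvector Ac v z" unfolding eigenvalue_def by auto
  then have "cnj z = z"
    using real_symmetric_complex_eigenvalue_real[OF A sym] Ac unfolding eigenvector_def Ac_def by auto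
  then obtain e where z_real: "z = of_real e"
    by (metis Reals_cnj_iff complex_is_Real_iff of_real_Re)
  have "poly (char_poly A) e = 0"
    using z unfolding cp z_real using of_real_hom.poly_map_poly[of "char_poly A" e] by simp
  then have "eigenvalue A e" using eigenvalue_root_char_poly[OF A] by auto
  then obtain w where "eigenvector A w e" unfolding eigenvalue_def by auto
  then show ?thesis unfolding eigenvector_def using A by auto
qed

definition mat_of_diag :: "real list \<Rightarrow> real mat" where
  "mat_of_diag ls = mat (length ls) (length ls) (\<lambda>(i,j). if i = j then ls ! i else 0)"

definition diag_block :: "real \<Rightarrow> real mat \<Rightarrow> real mat" where
  "diag_block c X = mat (Suc (dim_row X)) (Suc (dim_row X))
     (\<lambda>(i,j). if i = 0 \<and> j = 0 then c else if i = 0 \<or> j = 0 then 0 else X $$ (i - 1, j - 1))"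

lemma mat_of_diag_carrier[simp]: "mat_of_diag ls \<in> carrier_mat (length ls) (length ls)"
  unfolding mat_of_diag_def by auto

lemma diag_block_carrier[simp]: "X \<in> carrier_mat n n \<Longrightarrow> diag_block c X \<in> carrier_mat (Suc n) (Suc n)"
  unfolding diag_block_def by auto

lemma index_mult_mat_sum:
  assumes "A \<in> carrier_mat nr n" "B \<in> carrier_mat n nc" "i < nr" "j < nc"
  shows "(A * B) $$ (i,j) = (\<Sum>k<n. A $$ (i,k) * B $$ (k,j))"
  using assms by (auto simp: scalar_prod_def lessThan_atLeast0 intro!: sum.cong)

lemma diag_block_mult:
  assumes X: "X \<in> carrier_mat n n" and Y: "Y \<in> carrier_mat n n"
  shows "diag_block a X * diag_block b Y = diag_block (a*b) (X*Y)"
proof (rule eq_matI)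
  fix i j assume "i < dim_row (diag_block (a*b) (X*Y))" and "j < dim_col (diag_block (a*b) (X*Y))"
  then have i: "i < Suc n" and j: "j < Suc n" using X Y by (auto simp: diag_block_def)
  have "(diag_block a X * diag_block b Y) $$ (i,j)
      = (\<Sum>k<Suc n. diag_block a X $$ (i,k) * diag_block b Y $$ (k,j))"
    by (rule index_mult_mat_sum[OF diag_block_carrier[OF X] diag_block_carrier[OF Y] i j])
  also have "\<dots> = diag_block a X $$ (i,0) * diag_block b Y $$ (0,j)
      + (\<Sum>k<n. diag_block a X $$ (i,Suc k) * diag_block b Y $$ (Suc k,j))"
    by (subst sum.lessThan_Suc_shift) simp
  also have "\<dots> = diag_block (a*b) (X*Y) $$ (i,j)"
  proof (cases i)
    case 0
    then show ?thesis using X Y j by (cases j) (auto simp: diag_block_def)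
  next
    case (Suc i')
    show ?thesis
    proof (cases j)
      case 0
      then show ?thesis using X Y i Suc by (auto simp: diag_block_def)
    next
      case (Suc j')
      then show ?thesis using X Y i j \<open>i = Suc i'\<close>
        by (auto simp: diag_block_def scalar_prod_def lessThan_atLeast0 intro!: sum.cong)
    qed
  qed
  finally show "(diag_block a X * diag_block b Y) $$ (i,j) = diag_block (a*b) (X*Y) $$ (i,j)" .
qed (insert X Y, auto simp: diag_block_def)

lemma diag_block_transpose:
  "X \<in> carrier_mat n n \<Longrightarrow> transpose_mat (diag_block a X) = diag_block a (transpose_mat X)"
  by (intro eq_matI) (auto simp: diag_block_def)

lemma diag_block_one: "diag_block 1 (1\<^sub>m n) = 1\<^sub>m (Suc n)"
  by (intro eq_matI) (auto simp: diag_block_def)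

lemma diag_block_mat_of_diag: "diag_block e (mat_of_diag ls) = mat_of_diag (e # ls)"
  by (intro eq_matI) (auto simp: diag_block_def mat_of_diag_def nth_Cons')

lemma normalized_corthogonal_orthonormal:
  fixes ws :: "real vec list"
  assumes wsc: "set ws \<subseteq> carrier_vec N" and orth: "corthogonal ws"
    and i: "i < length ws" and j: "j < length ws"
  defines "us \<equiv> map (\<lambda>w. (1 / sqrt (w \<bullet> w)) \<cdot>\<^sub>v w) ws"
  shows "us ! i \<bullet> us ! j = (if i = j then 1 else 0)"
proof -
  have wi: "ws ! i \<in> carrier_vec N" and wj: "ws ! j \<in> carrier_vec N" using wsc i j by auto
  have "us ! i \<bullet> us ! j = (1 / sqrt (ws!i \<bullet> ws!i)) * (1 / sqrt (ws!j \<bullet> ws!j)) * (ws ! i \<bullet> ws ! j)"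
    unfolding us_def using i j wi wj by (simp add: scalar_prod_smult_left scalar_prod_smult_right)
  also have "\<dots> = (if i = j then 1 else 0)"
  proof (cases "i = j")
    case True
    have "ws ! i \<bullet>c ws ! i \<noteq> 0" using corthogonalD[OF orth i i] by auto
    moreover have "ws ! i \<bullet>c ws ! i \<ge> 0" by (rule conjugate_square_ge_0_vec)
    ultimately have "ws ! i \<bullet> ws ! i > 0" by simp
    then show ?thesis using True by (simp add: field_simps)
  next
    case False
    then have "ws ! i \<bullet>c ws ! j = 0" using corthogonalD[OF orth i j] by auto
    then show ?thesis using False by simp
  qed
  finally show ?thesis .
qed

lemma orthogonal_mat_with_first_column:
  fixes v :: "real vec"
  assumes v: "v \<in> carrier_vec N" and v0: "v \<noteq> 0\<^sub>v N"
  shows "\<exists>W c. W \<in> carrier_mat N N \<and> transpose_mat W * W = 1\<^sub>m N \<and> col W 0 = c \<cdot>\<^sub>v v"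
proof -
  have N: "0 < N"
  proof (rule ccontr)
    assume "\<not> 0 < N"
    with v have "v = 0\<^sub>v N" by (intro eq_vecI) auto
    with v0 show False ..
  qed
  interpret cof_vec_space N "TYPE(real)" .
  define b where "b = basis_completion v"
  from basis_completion[OF v v0, folded b_def]
  have dist_b: "distinct b" and indep: "\<not> lin_dep (set b)" and bc: "set b \<subseteq> carrier_vec N"
    and hdb: "hd b = v" and len_b: "length b = N" by auto
  from hdb len_b N obtain vs where bv: "b = v # vs" by (cases b) auto
  define ws where "ws = gram_schmidt N b"
  from gram_schmidt_result[OF bc dist_b indep ws_def]
  have wsc: "set ws \<subseteq> carrier_vec N" and orth: "corthogonal ws" and lenws: "length ws = N"
    using len_b by auto
  have hdws: "hd ws = v" unfolding ws_def bv by (rule gram_schmidt_hd[OF v])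
  define us where "us = map (\<lambda>w. (1 / sqrt (w \<bullet> w)) \<cdot>\<^sub>v w) ws"
  have lenus: "length us = N" unfolding us_def using lenws by simp
  have usc: "us ! i \<in> carrier_vec N" if "i < N" for i unfolding us_def using wsc lenws that by auto
  have usorth: "us ! i \<bullet> us ! j = (if i = j then 1 else 0)" if "i < N" "j < N" for i j
    unfolding us_def using normalized_corthogonal_orthonormal[OF wsc orth] that lenws by simp
  define W where "W = mat_of_cols N us"
  have W: "W \<in> carrier_mat N N" unfolding W_def using lenus by auto
  have colW: "col W i = us ! i" if "i < N" for i unfolding W_def using lenus usc that
    by (simp add: col_mat_of_cols)
  have "transpose_mat W * W = 1\<^sub>m N"
  proof (rule eq_matI)
    fix i j assume "i < dim_row (1\<^sub>m N :: real mat)" "j < dim_col (1\<^sub>m N :: real mat)"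
    then have i: "i < N" and j: "j < N" by auto
    have "(transpose_mat W * W) $$ (i,j) = col W i \<bullet> col W j" using W i j by simp
    then show "(transpose_mat W * W) $$ (i,j) = 1\<^sub>m N $$ (i,j)"
      using usorth[OF i j] colW[OF i] colW[OF j] i j by simp
  qed (insert W, auto)
  moreover have "col W 0 = (1 / sqrt (v \<bullet> v)) \<cdot>\<^sub>v v"
    unfolding colW[OF N] us_def using hdws lenws N by (cases ws) auto
  ultimately show ?thesis using W by blast
qed

lemma orthogonal_conj_eigenvector_block:
  fixes A W :: "real mat"
  assumes A: "A \<in> carrier_mat (Suc n) (Suc n)" and sym: "transpose_mat A = A"
    and W: "W \<in> carrier_mat (Suc n) (Suc n)" and WTW: "transpose_mat W * W = 1\<^sub>m (Suc n)"
    and ev: "A *\<^sub>v col W 0 = e \<cdot>\<^sub>v col W 0"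
  shows "\<exists>B. B \<in> carrier_mat n n \<and> transpose_mat B = B \<and> transpose_mat W * A * W = diag_block e B"
proof -
  define N where "N = Suc n"
  note A = A[folded N_def] and W = W[folded N_def] and WTW = WTW[folded N_def]
  define A' where "A' = transpose_mat W * A * W"
  have A': "A' \<in> carrier_mat N N" unfolding A'_def using A W by auto
  have "transpose_mat A' = transpose_mat W * transpose_mat (transpose_mat W * A)"
    unfolding A'_def by (rule transpose_mult[of _ N N _ N]) (use A W in auto)
  also have "transpose_mat (transpose_mat W * A) = transpose_mat A * W"
    by (subst transpose_mult[of _ N N _ N]) (use A W in auto)
  finally have symA': "transpose_mat A' = A'"
    unfolding A'_def sym using A W by (simp add: assoc_mult_mat[of _ N N _ N _ N])
  have A'col: "A' $$ (i,0) = (if i = 0 then e else 0)" if i: "i < N" for i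
  proof -
    have "A' $$ (i,0) = (transpose_mat W * (A * W)) $$ (i,0)"
      unfolding A'_def using A W by (simp add: assoc_mult_mat[of _ N N _ N _ N])
    also have "\<dots> = col W i \<bullet> col (A * W) 0" using A W i N_def by simp
    also have "col (A * W) 0 = A *\<^sub>v col W 0" using A W N_def by auto
    also have "col W i \<bullet> (A *\<^sub>v col W 0) = e * (col W i \<bullet> col W 0)" unfolding ev
      using W i N_def by (simp add: scalar_prod_smult_right)
    also have "col W i \<bullet> col W 0 = (transpose_mat W * W) $$ (i,0)" using W i N_def by simp
    finally show ?thesis unfolding WTW using i N_def by simp
  qed
  have A'row: "A' $$ (0,j) = (if j = 0 then e else 0)" if j: "j < N" for j
  proof -
    have "A' $$ (0,j) = transpose_mat A' $$ (j,0)" using A' j N_def by simp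
    then show ?thesis using symA' A'col[OF j] by simp
  qed
  define B where "B = mat n n (\<lambda>(i,j). A' $$ (Suc i, Suc j))"
  have B: "B \<in> carrier_mat n n" unfolding B_def by auto
  have "transpose_mat B = B"
  proof (rule eq_matI)
    fix i j assume "i < dim_row B" "j < dim_col B"
    then have i: "i < n" and j: "j < n" using B by auto
    have "A' $$ (Suc j, Suc i) = transpose_mat A' $$ (Suc i, Suc j)" using A' i j N_def by simp
    then show "transpose_mat B $$ (i,j) = B $$ (i,j)" using i j symA' unfolding B_def by simp
  qed (insert B, auto)
  moreover have "A' = diag_block e B"
  proof (rule eq_matI)
    fix i j assume "i < dim_row (diag_block e B)" "j < dim_col (diag_block e B)"
    then have i: "i < N" and j: "j < N" using B N_def by (auto simp: diag_block_def)
    show "A' $$ (i,j) = diag_block e B $$ (i,j)"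
    proof (cases "i = 0")
      case True then show ?thesis using A'row[OF j] i j B N_def by (auto simp: diag_block_def)
    next
      case False
      then show ?thesis using A'col[OF i] i j B N_def
        by (cases "j = 0") (auto simp: diag_block_def B_def)
    qed
  qed (insert A' B N_def, auto simp: diag_block_def)
  ultimately show ?thesis using B unfolding A'_def by blast
qed

theorem real_symmetric_orthogonal_diagonalization:
  fixes A :: "real mat"
  assumes "A \<in> carrier_mat n n" "transpose_mat A = A"
  shows "\<exists>U ls. U \<in> carrier_mat n n \<and> transpose_mat U * U = 1\<^sub>m n \<and> length ls = n
     \<and> A = U * mat_of_diag ls * transpose_mat U"
  using assms
proof (induction n arbitrary: A)
  case 0
  then show ?case
    by (intro exI[of _ "1\<^sub>m 0"] exI[of _ "[]"]) (auto intro!: eq_matI simp: mat_of_diag_def)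
next
  case (Suc n A)
  define N where "N = Suc n"
  have A: "A \<in> carrier_mat N N" and symA: "transpose_mat A = A" using Suc N_def by auto
  obtain e v where v: "v \<in> carrier_vec N" and v0: "v \<noteq> 0\<^sub>v N" and Av: "A *\<^sub>v v = e \<cdot>\<^sub>v v"
    using real_symmetric_mat_real_eigenvector[OF A symA] N_def by auto
  obtain W c where W: "W \<in> carrier_mat N N" and WTW: "transpose_mat W * W = 1\<^sub>m N"
    and W0: "col W 0 = c \<cdot>\<^sub>v v"
    using orthogonal_mat_with_first_column[OF v v0] by blast
  have WWT: "W * transpose_mat W = 1\<^sub>m N"
    by (rule mat_mult_left_right_inverse[of _ N], insert W WTW, auto)
  have "A *\<^sub>v col W 0 = e \<cdot>\<^sub>v col W 0" unfolding W0 using A v Av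
    by (simp add: mult_mat_vec smult_smult_assoc mult.commute)
  then obtain B where B: "B \<in> carrier_mat n n" and symB: "transpose_mat B = B"
    and A'B: "transpose_mat W * A * W = diag_block e B"
    using orthogonal_conj_eigenvector_block[OF A[unfolded N_def] symA W[unfolded N_def]
        WTW[unfolded N_def]] by blast
  obtain V ls where V: "V \<in> carrier_mat n n" and VTV: "transpose_mat V * V = 1\<^sub>m n"
    and lenls: "length ls = n" and BV: "B = V * mat_of_diag ls * transpose_mat V"
    using Suc.IH[OF B symB] by auto
  have D: "mat_of_diag ls \<in> carrier_mat n n" using lenls mat_of_diag_carrier by metis
  have VT: "transpose_mat V \<in> carrier_mat n n" using V by simp
  define U where "U = W * diag_block 1 V"
  have U: "U \<in> carrier_mat N N" unfolding U_def using W V N_def by auto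
  have UT: "transpose_mat U = diag_block 1 (transpose_mat V) * transpose_mat W"
    unfolding U_def diag_block_transpose[OF V, symmetric]
    by (rule transpose_mult[of _ N N _ N]) (use W V N_def in auto)
  have "transpose_mat U * U = (diag_block 1 (transpose_mat V) * transpose_mat W) * (W * diag_block 1 V)"
    unfolding UT by (simp add: U_def)
  also have "\<dots> = diag_block 1 (transpose_mat V) * (transpose_mat W * W) * diag_block 1 V"
    using W V N_def by (simp add: assoc_mult_mat[of _ N N _ N _ N])
  also have "\<dots> = diag_block 1 (transpose_mat V * V)"
    unfolding WTW using V N_def
    by (simp add: diag_block_mult[OF VT V] right_mult_one_mat[OF diag_block_carrier[OF VT]])
  also have "\<dots> = 1\<^sub>m N" unfolding VTV diag_block_one N_def ..
  finally have UTU: "transpose_mat U * U = 1\<^sub>m N" .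
  have "A = (W * transpose_mat W) * A * (W * transpose_mat W)" unfolding WWT using A by simp
  also have "\<dots> = W * (transpose_mat W * A * W) * transpose_mat W"
    using A W by (simp add: assoc_mult_mat[of _ N N _ N _ N])
  also have "transpose_mat W * A * W = diag_block 1 V * diag_block e (mat_of_diag ls) * diag_block 1 (transpose_mat V)"
    unfolding A'B BV using V D
    by (simp add: diag_block_mult[OF V D] diag_block_mult[OF mult_carrier_mat[OF V D] VT])
  also have "W * (diag_block 1 V * diag_block e (mat_of_diag ls) * diag_block 1 (transpose_mat V)) * transpose_mat W
     = U * mat_of_diag (e # ls) * transpose_mat U"
    unfolding UT diag_block_mat_of_diag[symmetric] unfolding U_def
    using W diag_block_carrier[OF V, of 1] diag_block_carrier[OF D, of e] diag_block_carrier[OF VT, of 1] N_def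
    by (simp add: assoc_mult_mat[of _ N N _ N _ N])
  finally have "A = U * mat_of_diag (e # ls) * transpose_mat U" .
  then show ?case using U UTU lenls N_def by (intro exI[of _ U] exI[of _ "e # ls"]) auto
qed

section \<open>Spectral calculus of an orthogonal diagonalization\<close>

lemma count_mset_eq_card_nth: "count (mset xs) a = card {k. k < length xs \<and> xs ! k = a}"
proof -
  have "count (mset xs) a = card {k. k < length xs \<and> a = xs ! k}"
    unfolding count_mset count_list_eq_length_filter length_filter_conv_card ..
  also have "{k. k < length xs \<and> a = xs ! k} = {k. k < length xs \<and> xs ! k = a}" by auto
  finally show ?thesis .
qed

lemma count_mset_map_upt: "count (mset (map f [0..<n])) k = card {i\<in>{..<n}. f i = k}"
proof -
  have "count (mset (map f [0..<n])) k = card {i. i < length (map f [0..<n]) \<and> map f [0..<n] ! i = k}"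
    by (rule count_mset_eq_card_nth)
  also have "{i. i < length (map f [0..<n]) \<and> map f [0..<n] ! i = k} = {i\<in>{..<n}. f i = k}" by auto
  finally show ?thesis .
qed

lemma proots_prod_linear: "proots (\<Prod>a\<leftarrow>xs. [:- a, 1:]) = mset (xs :: real list)"
proof (induction xs)
  case (Cons a xs)
  have nz: "(\<Prod>a\<leftarrow>xs. [:- a, 1:]) \<noteq> 0" by (auto simp: prod_list_zero_iff)
  have "proots ([:- a, 1:] * (\<Prod>a\<leftarrow>xs. [:- a, 1:])) = proots [:- a, 1:] + proots (\<Prod>a\<leftarrow>xs. [:- a, 1:])"
    by (rule proots_mult) (use nz in auto)
  then show ?case using Cons by (simp only: prod_list.Cons proots_linear_factor) simp
qed simp

locale orthogonal_diagonalization =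
  fixes A U :: "real mat" and ls :: "real list" and n :: nat
  assumes U: "U \<in> carrier_mat n n" and UTU: "transpose_mat U * U = 1\<^sub>m n"
    and length_ls: "length ls = n" and A_eq: "A = U * mat_of_diag ls * transpose_mat U"
begin

lemma U_mult_transpose: "U * transpose_mat U = 1\<^sub>m n"
  by (rule mat_mult_left_right_inverse[of _ n], insert U UTU, auto)

lemma A_carrier: "A \<in> carrier_mat n n" unfolding A_eq using U length_ls by (metis mat_of_diag_carrier mult_carrier_mat transpose_carrier_mat)

lemma A_index: "i < n \<Longrightarrow> j < n \<Longrightarrow> A $$ (i,j) = (\<Sum>k<n. U $$ (i,k) * ls ! k * U $$ (j,k))"
proof -
  assume i: "i < n" and j: "j < n"
  have D: "mat_of_diag ls \<in> carrier_mat n n" using length_ls mat_of_diag_carrier by metis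
  have "A $$ (i,j) = (\<Sum>l<n. (U * mat_of_diag ls) $$ (i,l) * transpose_mat U $$ (l,j))"
    unfolding A_eq by (rule index_mult_mat_sum[OF mult_carrier_mat[OF U D] _ i j]) (use U in auto)
  also have "\<dots> = (\<Sum>l<n. (\<Sum>k<n. U $$ (i,k) * mat_of_diag ls $$ (k,l)) * U $$ (j,l))"
    using U D i j by (intro sum.cong refl) (auto simp: scalar_prod_def lessThan_atLeast0 intro!: sum.cong)
  also have "\<dots> = (\<Sum>l<n. U $$ (i,l) * ls ! l * U $$ (j,l))"
  proof (intro sum.cong refl)
    fix l assume l: "l \<in> {..<n}"
    have "(\<Sum>k<n. U $$ (i,k) * mat_of_diag ls $$ (k,l)) = (\<Sum>k<n. if k = l then U $$ (i,l) * ls ! l else 0)"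
      using l length_ls by (intro sum.cong refl) (auto simp: mat_of_diag_def)
    also have "\<dots> = U $$ (i,l) * ls ! l" using l by simp
    finally show "(\<Sum>k<n. U $$ (i,k) * mat_of_diag ls $$ (k,l)) * U $$ (j,l) = U $$ (i,l) * ls ! l * U $$ (j,l)"
      by simp
  qed
  finally show ?thesis .
qed

lemma cols_orthonormal: "k < n \<Longrightarrow> l < n \<Longrightarrow> (\<Sum>i<n. U $$ (i,k) * U $$ (i,l)) = (if k = l then 1 else 0)"
proof -
  assume k: "k < n" and l: "l < n"
  have "(transpose_mat U * U) $$ (k,l) = (\<Sum>i<n. U $$ (i,k) * U $$ (i,l))"
    using index_mult_mat_sum[of "transpose_mat U" n n U n k l] U k l by auto
  then show ?thesis using UTU k l by simp
qed

lemma rows_orthonormal: "i < n \<Longrightarrow> j < n \<Longrightarrow> (\<Sum>k<n. U $$ (i,k) * U $$ (j,k)) = (if i = j then 1 else 0)"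
proof -
  assume i: "i < n" and j: "j < n"
  have "(U * transpose_mat U) $$ (i,j) = (\<Sum>k<n. U $$ (i,k) * U $$ (j,k))"
    using index_mult_mat_sum[of U n n "transpose_mat U" n i j] U i j by auto
  then show ?thesis using U_mult_transpose i j by simp
qed

definition coord :: "(nat \<Rightarrow> real) \<Rightarrow> nat \<Rightarrow> real" where
  "coord x k = (\<Sum>i<n. U $$ (i,k) * x i)"

lemma A_mult_coord: "i < n \<Longrightarrow> (\<Sum>j<n. A $$ (i,j) * x j) = (\<Sum>k<n. U $$ (i,k) * ls ! k * coord x k)"
proof -
  assume i: "i < n"
  have "(\<Sum>j<n. A $$ (i,j) * x j) = (\<Sum>j<n. \<Sum>k<n. U $$ (i,k) * ls ! k * U $$ (j,k) * x j)"
    using i by (simp add: A_index sum_distrib_right)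
  also have "\<dots> = (\<Sum>k<n. \<Sum>j<n. U $$ (i,k) * ls ! k * U $$ (j,k) * x j)" by (rule sum.swap)
  also have "\<dots> = (\<Sum>k<n. U $$ (i,k) * ls ! k * coord x k)"
    unfolding coord_def by (simp add: sum_distrib_left mult.assoc)
  finally show ?thesis .
qed

lemma coord_expansion: "i < n \<Longrightarrow> x i = (\<Sum>k<n. U $$ (i,k) * coord x k)"
proof -
  assume i: "i < n"
  have "(\<Sum>k<n. U $$ (i,k) * coord x k) = (\<Sum>k<n. \<Sum>j<n. U $$ (i,k) * U $$ (j,k) * x j)"
    unfolding coord_def by (simp add: sum_distrib_left mult.assoc)
  also have "\<dots> = (\<Sum>j<n. \<Sum>k<n. U $$ (i,k) * U $$ (j,k) * x j)" by (rule sum.swap)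
  also have "\<dots> = (\<Sum>j<n. (if i = j then 1 else 0) * x j)"
  proof (intro sum.cong refl)
    fix j assume j: "j \<in> {..<n}"
    have "(\<Sum>k<n. U $$ (i,k) * U $$ (j,k) * x j) = (\<Sum>k<n. U $$ (i,k) * U $$ (j,k)) * x j"
      by (simp add: sum_distrib_right)
    then show "(\<Sum>k<n. U $$ (i,k) * U $$ (j,k) * x j) = (if i = j then 1 else 0) * x j"
      using rows_orthonormal[OF i, of j] j by simp
  qed
  also have "\<dots> = (\<Sum>j<n. if i = j then x j else 0)" by (intro sum.cong) auto
  also have "\<dots> = x i" using i by (simp add: sum.delta)
  finally show ?thesis by simp
qed

lemma orthogonal_inner_product: "(\<Sum>i<n. (\<Sum>k<n. U $$ (i,k) * f k) * (\<Sum>k<n. U $$ (i,k) * g k)) = (\<Sum>k<n. f k * g k)"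
proof -
  have "(\<Sum>i<n. (\<Sum>k<n. U $$ (i,k) * f k) * (\<Sum>l<n. U $$ (i,l) * g l))
      = (\<Sum>i<n. \<Sum>k<n. \<Sum>l<n. U $$ (i,k) * U $$ (i,l) * (f k * g l))"
    unfolding sum_product by (intro sum.cong refl) (simp add: mult_ac)
  also have "\<dots> = (\<Sum>k<n. \<Sum>i<n. \<Sum>l<n. U $$ (i,k) * U $$ (i,l) * (f k * g l))" by (rule sum.swap)
  also have "\<dots> = (\<Sum>k<n. \<Sum>l<n. \<Sum>i<n. U $$ (i,k) * U $$ (i,l) * (f k * g l))"
    by (rule sum.cong[OF refl], rule sum.swap)
  also have "\<dots> = (\<Sum>k<n. \<Sum>l<n. (if k = l then 1 else 0) * (f k * g l))"
  proof (intro sum.cong refl)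
    fix k l assume k: "k \<in> {..<n}" and l: "l \<in> {..<n}"
    have "(\<Sum>i<n. U $$ (i,k) * U $$ (i,l) * (f k * g l)) = (\<Sum>i<n. U $$ (i,k) * U $$ (i,l)) * (f k * g l)"
      by (simp add: sum_distrib_right)
    then show "(\<Sum>i<n. U $$ (i,k) * U $$ (i,l) * (f k * g l)) = (if k = l then 1 else 0) * (f k * g l)"
      using cols_orthonormal[of k l] k l by simp
  qed
  also have "\<dots> = (\<Sum>k<n. \<Sum>l<n. if k = l then f k * g l else 0)" by (intro sum.cong) auto
  also have "\<dots> = (\<Sum>k<n. f k * g k)" by (simp add: sum.delta)
  finally show ?thesis .
qed

lemma parseval: "(\<Sum>i<n. (x i)^2) = (\<Sum>k<n. (coord x k)^2)"
proof -
  have "(\<Sum>i<n. (x i)^2) = (\<Sum>i<n. (\<Sum>k<n. U $$ (i,k) * coord x k) * (\<Sum>k<n. U $$ (i,k) * coord x k))"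
    by (intro sum.cong refl) (use coord_expansion in \<open>auto simp: power2_eq_square\<close>)
  also have "\<dots> = (\<Sum>k<n. (coord x k)^2)" by (subst orthogonal_inner_product) (simp add: power2_eq_square)
  finally show ?thesis .
qed

lemma quadratic_form_coord: "(\<Sum>i<n. x i * (\<Sum>j<n. A $$ (i,j) * x j)) = (\<Sum>k<n. ls ! k * (coord x k)^2)"
proof -
  have "(\<Sum>i<n. x i * (\<Sum>j<n. A $$ (i,j) * x j)) =
     (\<Sum>i<n. (\<Sum>k<n. U $$ (i,k) * coord x k) * (\<Sum>k<n. U $$ (i,k) * (ls ! k * coord x k)))"
    by (intro sum.cong refl) (use coord_expansion A_mult_coord in \<open>auto simp: mult.assoc\<close>)
  also have "\<dots> = (\<Sum>k<n. ls ! k * (coord x k)^2)" by (subst orthogonal_inner_product) (simp add: power2_eq_square mult.left_commute)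
  finally show ?thesis .
qed

lemma norm_A_mult_coord: "(\<Sum>i<n. (\<Sum>j<n. A $$ (i,j) * x j)^2) = (\<Sum>k<n. (ls ! k)^2 * (coord x k)^2)"
proof -
  have "(\<Sum>i<n. (\<Sum>j<n. A $$ (i,j) * x j)^2) =
     (\<Sum>i<n. (\<Sum>k<n. U $$ (i,k) * (ls ! k * coord x k)) * (\<Sum>k<n. U $$ (i,k) * (ls ! k * coord x k)))"
    by (intro sum.cong refl) (use A_mult_coord in \<open>auto simp: mult.assoc power2_eq_square\<close>)
  also have "\<dots> = (\<Sum>k<n. (ls ! k)^2 * (coord x k)^2)" by (subst orthogonal_inner_product) (simp add: power2_eq_square mult.commute mult.left_commute)
  finally show ?thesis .
qed

lemma col_eigenvector: "k < n \<Longrightarrow> i < n \<Longrightarrow> (\<Sum>j<n. A $$ (i,j) * U $$ (j,k)) = ls ! k * U $$ (i,k)"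
proof -
  assume k: "k < n" and i: "i < n"
  have c: "coord (\<lambda>j. U $$ (j,k)) l = (if l = k then 1 else 0)" if "l < n" for l
    unfolding coord_def using cols_orthonormal[OF that k] by (simp add: mult.commute)
  have "(\<Sum>j<n. A $$ (i,j) * U $$ (j,k)) = (\<Sum>l<n. U $$ (i,l) * ls ! l * (if l = k then 1 else 0))"
    using A_mult_coord[OF i, of "\<lambda>j. U $$ (j,k)"] c by simp
  also have "\<dots> = (\<Sum>l<n. if l = k then U $$ (i,k) * ls ! k else 0)" by (intro sum.cong) auto
  also have "\<dots> = ls ! k * U $$ (i,k)" using k by (simp add: sum.delta')
  finally show ?thesis .
qed

lemma char_poly_eq: "char_poly A = (\<Prod>a\<leftarrow>ls. [:- a, 1:])"
proof -
  have D: "mat_of_diag ls \<in> carrier_mat n n" using length_ls mat_of_diag_carrier by metis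
  have "similar_mat A (mat_of_diag ls)"
    by (rule similar_matI[of A "mat_of_diag ls" U "transpose_mat U" n], insert U D A_carrier UTU U_mult_transpose A_eq, auto)
  then have "char_poly A = char_poly (mat_of_diag ls)" by (rule char_poly_similar)
  also have "\<dots> = (\<Prod>a\<leftarrow>diag_mat (mat_of_diag ls). [:- a, 1:])"
    by (rule char_poly_upper_triangular[OF D]) (auto simp: mat_of_diag_def)
  also have "diag_mat (mat_of_diag ls) = ls" unfolding diag_mat_def mat_of_diag_def
    by (intro nth_equalityI) auto
  finally show ?thesis .
qed

lemma proots_char_poly: "proots (char_poly A) = mset ls"
  unfolding char_poly_eq by (rule proots_prod_linear)

lemma trace_eq_sum_list: "(\<Sum>i<n. A $$ (i,i)) = sum_list ls"
proof -
  have "(\<Sum>i<n. A $$ (i,i)) = (\<Sum>i<n. \<Sum>k<n. ls ! k * (U $$ (i,k) * U $$ (i,k)))"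
    by (intro sum.cong refl) (simp add: A_index mult_ac)
  also have "\<dots> = (\<Sum>k<n. \<Sum>i<n. ls ! k * (U $$ (i,k) * U $$ (i,k)))" by (rule sum.swap)
  also have "\<dots> = (\<Sum>k<n. ls ! k)"
  proof (intro sum.cong refl)
    fix k assume k: "k \<in> {..<n}"
    have "(\<Sum>i<n. ls ! k * (U $$ (i,k) * U $$ (i,k))) = ls ! k * (\<Sum>i<n. U $$ (i,k) * U $$ (i,k))"
      by (simp add: sum_distrib_left)
    then show "(\<Sum>i<n. ls ! k * (U $$ (i,k) * U $$ (i,k))) = ls ! k" using cols_orthonormal[of k k] k by simp
  qed
  also have "\<dots> = sum_list ls" using length_ls by (simp add: sum_list_sum_nth lessThan_atLeast0)
  finally show ?thesis .
qed

lemma sum_squares_eq_sum_list: "(\<Sum>i<n. \<Sum>j<n. (A $$ (i,j))^2) = sum_list (map (\<lambda>a. a^2) ls)"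
proof -
  have At: "A $$ (i,j) = A $$ (j,i)" if "i < n" "j < n" for i j
    using A_index that by (simp add: A_index mult.commute mult.left_commute)
  have e: "(\<Sum>l<n. A $$ (i,l) * (if l = j then 1 else 0)) = A $$ (i,j)" if "j < n" for i j
  proof -
    have "(\<Sum>l<n. A $$ (i,l) * (if l = j then 1 else 0)) = (\<Sum>l<n. if l = j then A $$ (i,j) else 0)"
      by (intro sum.cong) auto
    then show ?thesis using that by (simp add: sum.delta')
  qed
  have "(\<Sum>i<n. \<Sum>j<n. (A $$ (i,j))^2) = (\<Sum>j<n. \<Sum>i<n. (A $$ (i,j))^2)" by (rule sum.swap)
  also have "\<dots> = (\<Sum>j<n. \<Sum>i<n. (\<Sum>l<n. A $$ (i,l) * (if l = j then 1 else 0))^2)"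
    by (intro sum.cong refl) (simp add: e)
  also have "\<dots> = (\<Sum>j<n. \<Sum>k<n. (ls ! k)^2 * (coord (\<lambda>l. if l = j then 1 else 0) k)^2)"
    by (rule sum.cong[OF refl], rule norm_A_mult_coord)
  also have "\<dots> = (\<Sum>j<n. \<Sum>k<n. (ls ! k)^2 * (U $$ (j,k))^2)"
  proof (intro sum.cong refl)
    fix j k assume j: "j \<in> {..<n}" and k: "k \<in> {..<n}"
    have "coord (\<lambda>l. if l = j then 1 else 0) k = (\<Sum>i<n. if i = j then U $$ (j,k) else 0)"
      unfolding coord_def by (intro sum.cong) auto
    also have "\<dots> = U $$ (j,k)" using j by (simp add: sum.delta')
    finally show "(ls ! k)^2 * (coord (\<lambda>l. if l = j then 1 else 0) k)^2 = (ls ! k)^2 * (U $$ (j,k))^2" by simp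
  qed
  also have "\<dots> = (\<Sum>k<n. \<Sum>j<n. (ls ! k)^2 * (U $$ (j,k))^2)" by (rule sum.swap)
  also have "\<dots> = (\<Sum>k<n. (ls ! k)^2)"
  proof (intro sum.cong refl)
    fix k assume k: "k \<in> {..<n}"
    have "(\<Sum>j<n. (ls ! k)^2 * (U $$ (j,k))^2) = (ls ! k)^2 * (\<Sum>j<n. U $$ (j,k) * U $$ (j,k))"
      by (simp add: sum_distrib_left power2_eq_square)
    then show "(\<Sum>j<n. (ls ! k)^2 * (U $$ (j,k))^2) = (ls ! k)^2" using cols_orthonormal[of k k] k by simp
  qed
  also have "\<dots> = sum_list (map (\<lambda>a. a^2) ls)" using length_ls
    by (simp add: sum_list_sum_nth lessThan_atLeast0)
  finally show ?thesis .
qed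


lemma kernel_coord_zero: assumes "\<forall>i<n. (\<Sum>j<n. A $$ (i,j) * x j) = 0" and k: "k < n" and nz: "ls ! k \<noteq> 0"
  shows "coord x k = 0"
proof -
  have "(\<Sum>k<n. (ls ! k)^2 * (coord x k)^2) = 0" using norm_A_mult_coord[of x] assms(1) by simp
  then have "\<forall>k\<in>{..<n}. (ls ! k)^2 * (coord x k)^2 = 0"
    by (subst (asm) sum_nonneg_eq_0_iff) auto
  then show ?thesis using k nz by auto
qed

lemma kernel_expansion: assumes ker: "\<forall>i<n. (\<Sum>j<n. A $$ (i,j) * x j) = 0" and i: "i < n"
  shows "x i = (\<Sum>k\<in>{k. k < n \<and> ls ! k = 0}. U $$ (i,k) * coord x k)"
proof -
  have "x i = (\<Sum>k<n. U $$ (i,k) * coord x k)" by (rule coord_expansion[OF i])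
  also have "\<dots> = (\<Sum>k\<in>{k. k < n \<and> ls ! k = 0}. U $$ (i,k) * coord x k)"
    by (rule sum.mono_neutral_right) (auto simp: kernel_coord_zero[OF ker])
  finally show ?thesis .
qed

lemma count_eigenvalue: "count (mset ls) \<mu> = card {k. k < n \<and> ls ! k = \<mu>}"
  using count_mset_eq_card_nth[of ls \<mu>] length_ls by simp

lemma eigenvalue_eigenfunction:
  assumes "\<mu> \<in> set ls"
  shows "\<exists>x. (\<exists>i<n. x i \<noteq> 0) \<and> (\<forall>i<n. (\<Sum>j<n. A $$ (i,j) * x j) = \<mu> * x i)"
proof -
  obtain k where k: "k < n" "ls ! k = \<mu>" using assms length_ls by (metis in_set_conv_nth)
  have "\<exists>i<n. U $$ (i,k) \<noteq> 0"
  proof (rule ccontr)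
    assume "\<not> ?thesis"
    then have "(\<Sum>i<n. U $$ (i,k) * U $$ (i,k)) = 0" by simp
    then show False using cols_orthonormal[OF k(1) k(1)] by simp
  qed
  then show ?thesis using col_eigenvector[OF k(1)] k(2) by (intro exI[of _ "\<lambda>j. U $$ (j,k)"]) auto
qed

lemma quadratic_form_le:
  assumes "\<forall>k<n. ls ! k \<le> c"
  shows "(\<Sum>i<n. x i * (\<Sum>j<n. A $$ (i,j) * x j)) \<le> c * (\<Sum>i<n. (x i)^2)"
proof -
  have "(\<Sum>i<n. x i * (\<Sum>j<n. A $$ (i,j) * x j)) = (\<Sum>k<n. ls ! k * (coord x k)^2)"
    by (rule quadratic_form_coord)
  also have "\<dots> \<le> (\<Sum>k<n. c * (coord x k)^2)"
    by (intro sum_mono mult_right_mono) (use assms in auto)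
  also have "\<dots> = c * (\<Sum>i<n. (x i)^2)" using parseval[of x] by (simp add: sum_distrib_left)
  finally show ?thesis .
qed

text \<open>If no eigenvalue lies strictly between a and b, then (A - a)(A - b) is positive semidefinite.\<close>
lemma spectral_gap_quadratic_inequality:
  assumes gap: "\<forall>k<n. ls ! k \<le> a \<or> b \<le> ls ! k" and ab: "a \<le> b"
  shows "(a + b) * (\<Sum>i<n. x i * (\<Sum>j<n. A $$ (i,j) * x j))
    \<le> (\<Sum>i<n. (\<Sum>j<n. A $$ (i,j) * x j)^2) + a * b * (\<Sum>i<n. (x i)^2)"
proof -
  have "0 \<le> (\<Sum>k<n. (ls ! k - a) * (ls ! k - b) * (coord x k)^2)"
  proof (intro sum_nonneg)
    fix k assume "k \<in> {..<n}"
    then have "0 \<le> (ls ! k - a) * (ls ! k - b)"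
      using gap ab by (cases "ls ! k \<le> a") (auto intro: mult_nonpos_nonpos)
    then show "0 \<le> (ls ! k - a) * (ls ! k - b) * (coord x k)^2" by simp
  qed
  also have "\<dots> = (\<Sum>k<n. (ls ! k)^2 * (coord x k)^2
      - ((a + b) * (ls ! k * (coord x k)^2) - a * b * (coord x k)^2))"
    by (intro sum.cong refl) (simp add: algebra_simps power2_eq_square)
  also have "\<dots> = (\<Sum>k<n. (ls ! k)^2 * (coord x k)^2) - (a + b) * (\<Sum>k<n. ls ! k * (coord x k)^2)
      + a * b * (\<Sum>k<n. (coord x k)^2)"
    by (simp add: sum_subtractf sum_distrib_left)
  finally show ?thesis
    using norm_A_mult_coord[of x] quadratic_form_coord[of x] parseval[of x] by simp
qed

lemma kernel_vectors_proportional: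
  assumes zero: "count (mset ls) 0 \<le> 1"
    and x: "\<forall>i<n. (\<Sum>j<n. A $$ (i,j) * x j) = 0" and y: "\<forall>i<n. (\<Sum>j<n. A $$ (i,j) * y j) = 0"
    and i: "i < n" and xi: "x i \<noteq> 0" and j: "j < n"
  shows "y j * x i = y i * x j"
proof -
  let ?Z = "{k. k < n \<and> ls ! k = 0}"
  have "card ?Z \<le> 1" using zero count_eigenvalue by simp
  have "?Z \<noteq> {}"
  proof
    assume Z: "?Z = {}"
    have "x i = 0" using kernel_expansion[OF x i] unfolding Z by simp
    with xi show False ..
  qed
  then have "0 < card ?Z" by (intro card_gt_0_iff[THEN iffD2] conjI) simp_all
  with \<open>card ?Z \<le> 1\<close> have "card ?Z = 1" by simp
  then obtain k0 where Z: "?Z = {k0}" by (rule card_1_singletonE)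
  show ?thesis
    using kernel_expansion[OF x i] kernel_expansion[OF x j] kernel_expansion[OF y i]
      kernel_expansion[OF y j] unfolding Z by simp
qed

lemma zero_eigenvalue_simple:
  assumes const: "\<And>x. \<forall>i<n. (\<Sum>j<n. A $$ (i,j) * x j) = 0 \<Longrightarrow> \<forall>i<n. x i = x 0"
  shows "count (mset ls) 0 \<le> 1"
proof -
  have col_const: "(\<Sum>i<n. U $$ (i,k) * U $$ (i,l)) = real n * (U $$ (0,k) * U $$ (0,l))"
    if "k < n" "ls ! k = 0" "l < n" "ls ! l = 0" for k l
  proof -
    define ak al where "ak = U $$ (0,k)" and "al = U $$ (0,l)"
    have "\<forall>i<n. U $$ (i,k) = ak" "\<forall>i<n. U $$ (i,l) = al"
      unfolding ak_def al_def by (rule const; simp add: col_eigenvector that)+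
    then have "(\<Sum>i<n. U $$ (i,k) * U $$ (i,l)) = (\<Sum>i<n. ak * al)"
      by (intro sum.cong) simp_all
    then show ?thesis unfolding ak_def al_def by simp
  qed
  \<comment> \<open>Two orthonormal constant columns cannot exist.\<close>
  have "k = l" if k: "k < n" "ls ! k = 0" and l: "l < n" "ls ! l = 0" for k l
  proof (rule ccontr)
    assume kl: "k \<noteq> l"
    have "real n * (U $$ (0,k) * U $$ (0,k)) = 1" "real n * (U $$ (0,l) * U $$ (0,l)) = 1"
      using col_const[OF k k] col_const[OF l l] cols_orthonormal k l by simp_all
    moreover have "real n * (U $$ (0,k) * U $$ (0,l)) = 0"
      using col_const[OF k l] cols_orthonormal k l kl by simp
    ultimately show False by auto
  qed
  then show ?thesis unfolding count_eigenvalue by (simp add: card_le_Suc0_iff_eq)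
qed

end
section \<open>Laplacian spectra of simple graphs\<close>

lemma laplacian_carrier[simp]: "laplacian n E \<in> carrier_mat n n"
  unfolding laplacian_def by auto

lemma laplacian_index:
  "i < n \<Longrightarrow> j < n \<Longrightarrow> laplacian n E $$ (i,j) =
     (if i = j then real (degree n E i) else 0) - (if E i j then 1 else 0)"
  unfolding laplacian_def by auto

lemma simple_graph_irrefl: "simple_graph n E \<Longrightarrow> \<not> E i i"
  unfolding simple_graph_def by auto

lemma simple_graph_sym: "simple_graph n E \<Longrightarrow> E i j \<Longrightarrow> E j i"
  unfolding simple_graph_def by auto

lemma simple_graph_bound: "simple_graph n E \<Longrightarrow> E i j \<Longrightarrow> i < n \<and> j < n"
  unfolding simple_graph_def by auto

lemma laplacian_symmetric: "simple_graph n E \<Longrightarrow> transpose_mat (laplacian n E) = laplacian n E"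
  unfolding laplacian_def by (intro eq_matI) (auto dest: simple_graph_sym)

lemma degree_eq_sum: "degree n E i = (\<Sum>j<n. if E i j then 1 else (0::nat))"
proof -
  have e: "{j. j < n \<and> E i j} = {j \<in> {..<n}. E i j}" by auto
  have "degree n E i = (\<Sum>j\<in>{j \<in> {..<n}. E i j}. 1)" unfolding degree_def e card_eq_sum ..
  also have "\<dots> = (\<Sum>j<n. if E i j then 1 else 0)" by (rule sum.inter_filter[OF finite_lessThan])
  finally show ?thesis .
qed

lemma real_degree_eq_sum: "real (degree n E i) = (\<Sum>j<n. if E i j then 1 else 0)"
proof -
  have "(\<Sum>j<n. (if E i j then 1 else 0 :: real)) = (\<Sum>j\<in>{j. j < n \<and> E i j}. 1)"
    by (simp add: sum.If_cases lessThan_def Collect_conj_eq Int_commute)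
  then show ?thesis unfolding degree_def by simp
qed

lemma sum_if_adjacent: "(\<Sum>j<(n::nat). if E i j then x j else 0) = sum x {j. j < n \<and> E i j}"
proof -
  have "{j. j < n \<and> E i j} = {j \<in> {..<n}. E i j}" by auto
  moreover have "sum x {j \<in> {..<n}. E i j} = (\<Sum>j<n. if E i j then x j else 0)"
    by (rule sum.inter_filter) simp
  ultimately show ?thesis by simp
qed

lemma laplacian_mult_row:
  assumes "i < n"
  shows "(\<Sum>j<n. laplacian n E $$ (i,j) * x j)
    = real (degree n E i) * x i - (\<Sum>j<n. if E i j then x j else 0)"
proof -
  have "(\<Sum>j<n. laplacian n E $$ (i,j) * x j) =
      (\<Sum>j<n. (if i = j then real (degree n E i) * x j else 0) - (if E i j then x j else 0))"
    using assms by (intro sum.cong refl) (auto simp: laplacian_index algebra_simps)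
  also have "\<dots> = (\<Sum>j<n. (if i = j then real (degree n E i) * x j else 0))
      - (\<Sum>j<n. if E i j then x j else 0)"
    by (rule sum_subtractf)
  also have "(\<Sum>j<n. (if i = j then real (degree n E i) * x j else 0)) = real (degree n E i) * x i"
    using assms by (simp add: sum.delta)
  finally show ?thesis .
qed

lemma laplacian_quadratic_form: assumes sg: "simple_graph n E"
  shows "(\<Sum>i<n. x i * (\<Sum>j<n. laplacian n E $$ (i,j) * x j)) =
     (\<Sum>i<n. \<Sum>j<n. if E i j then (x i - x j)^2 else 0) / 2"
proof -
  have "(\<Sum>i<n. x i * (\<Sum>j<n. laplacian n E $$ (i,j) * x j)) =
        (\<Sum>i<n. \<Sum>j<n. if E i j then (x i)^2 - x i * x j else 0)"
  proof (intro sum.cong refl)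
    fix i assume i: "i \<in> {..<n}"
    have "x i * (\<Sum>j<n. laplacian n E $$ (i,j) * x j) =
        real (degree n E i) * (x i)^2 - (\<Sum>j<n. if E i j then x i * x j else 0)"
    proof -
      have "x i * (\<Sum>j<n. if E i j then x j else 0) = (\<Sum>j<n. x i * (if E i j then x j else 0))"
        by (rule sum_distrib_left)
      also have "\<dots> = (\<Sum>j<n. if E i j then x i * x j else 0)" by (intro sum.cong) auto
      finally show ?thesis using i by (simp add: laplacian_mult_row power2_eq_square right_diff_distrib)
    qed
    also have "real (degree n E i) * (x i)^2 = (\<Sum>j<n. if E i j then (x i)^2 else 0)"
    proof -
      have "real (degree n E i) * (x i)^2 = (\<Sum>j<n. (if E i j then 1 else 0) * (x i)^2)"
        unfolding real_degree_eq_sum by (rule sum_distrib_right)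
      also have "\<dots> = (\<Sum>j<n. if E i j then (x i)^2 else 0)" by (intro sum.cong) auto
      finally show ?thesis .
    qed
    also have "(\<Sum>j<n. if E i j then (x i)^2 else 0) - (\<Sum>j<n. if E i j then x i * x j else 0)
        = (\<Sum>j<n. (if E i j then (x i)^2 else 0) - (if E i j then x i * x j else 0))"
      by (rule sum_subtractf[symmetric])
    also have "\<dots> = (\<Sum>j<n. if E i j then (x i)^2 - x i * x j else 0)" by (intro sum.cong) auto
    finally show "x i * (\<Sum>j<n. laplacian n E $$ (i,j) * x j) = (\<Sum>j<n. if E i j then (x i)^2 - x i * x j else 0)" .
  qed
  moreover have "(\<Sum>i<n. \<Sum>j<n. if E i j then (x i)^2 - x i * x j else 0) =
        (\<Sum>i<n. \<Sum>j<n. if E i j then (x j)^2 - x j * x i else 0)"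
  proof -
    have "(\<Sum>i<n. \<Sum>j<n. if E i j then (x i)^2 - x i * x j else 0) =
          (\<Sum>j<n. \<Sum>i<n. if E i j then (x i)^2 - x i * x j else 0)" by (rule sum.swap)
    also have "\<dots> = (\<Sum>j<n. \<Sum>i<n. if E j i then (x i)^2 - x i * x j else 0)"
      using sg by (intro sum.cong refl) (auto dest: simple_graph_sym)
    finally show ?thesis .
  qed
  moreover have "(\<Sum>i<n. \<Sum>j<n. if E i j then (x i - x j)^2 else 0) =
    (\<Sum>i<n. \<Sum>j<n. if E i j then (x i)^2 - x i * x j else 0) +
    (\<Sum>i<n. \<Sum>j<n. if E i j then (x j)^2 - x j * x i else 0)"
    unfolding sum.distrib[symmetric] by (intro sum.cong refl) (auto simp: power2_eq_square algebra_simps)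
  ultimately show ?thesis by simp
qed

lemma laplacian_trace:
  "simple_graph n E \<Longrightarrow> (\<Sum>i<n. laplacian n E $$ (i,i)) = (\<Sum>i<n. real (degree n E i))"
  by (intro sum.cong refl) (simp add: laplacian_index simple_graph_irrefl)

lemma laplacian_row_sum_squares:
  assumes sg: "simple_graph n E" and i: "i < n"
  shows "(\<Sum>j<n. (laplacian n E $$ (i,j))^2) = (real (degree n E i))^2 + real (degree n E i)"
proof -
  have "(\<Sum>j<n. (laplacian n E $$ (i,j))^2) =
      (\<Sum>j<n. (if i = j then (real (degree n E i))^2 else 0) + (if E i j then 1 else 0))"
    using sg i by (intro sum.cong refl) (auto simp: laplacian_index simple_graph_irrefl)
  also have "\<dots> = (real (degree n E i))^2 + real (degree n E i)"
    using i by (simp add: sum.distrib sum.delta real_degree_eq_sum)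
  finally show ?thesis .
qed

lemma lap_spectrum_diagonalization:
  assumes "simple_graph n E"
  obtains U ls where "orthogonal_diagonalization (laplacian n E) U ls n"
    and "lap_spectrum n E = mset ls"
proof -
  obtain U ls where "orthogonal_diagonalization (laplacian n E) U ls n"
    using real_symmetric_orthogonal_diagonalization[OF laplacian_carrier laplacian_symmetric[OF assms]]
    unfolding orthogonal_diagonalization_def by blast
  with that show thesis
    unfolding lap_spectrum_def using orthogonal_diagonalization.proots_char_poly by blast
qed

lemma size_lap_spectrum: "simple_graph n E \<Longrightarrow> size (lap_spectrum n E) = n"
  by (metis lap_spectrum_diagonalization orthogonal_diagonalization.length_ls size_mset)

lemma sum_lap_spectrum:
  assumes sg: "simple_graph n E"
  shows "sum_mset (lap_spectrum n E) = (\<Sum>i<n. real (degree n E i))"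
proof -
  obtain U ls where od: "orthogonal_diagonalization (laplacian n E) U ls n"
    and spec: "lap_spectrum n E = mset ls"
    using lap_spectrum_diagonalization[OF sg] .
  show ?thesis
    using orthogonal_diagonalization.trace_eq_sum_list[OF od] laplacian_trace[OF sg]
    unfolding spec sum_mset_sum_list by simp
qed

lemma sum_squares_lap_spectrum:
  assumes sg: "simple_graph n E"
  shows "sum_mset (image_mset (\<lambda>\<mu>. \<mu>^2) (lap_spectrum n E))
    = (\<Sum>i<n. (real (degree n E i))^2 + real (degree n E i))"
proof -
  obtain U ls where od: "orthogonal_diagonalization (laplacian n E) U ls n"
    and spec: "lap_spectrum n E = mset ls"
    using lap_spectrum_diagonalization[OF sg] .
  have "sum_mset (image_mset (\<lambda>\<mu>. \<mu>^2) (lap_spectrum n E))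
      = (\<Sum>i<n. \<Sum>j<n. (laplacian n E $$ (i,j))^2)"
    using orthogonal_diagonalization.sum_squares_eq_sum_list[OF od]
    unfolding spec mset_map[symmetric] sum_mset_sum_list by simp
  also have "\<dots> = (\<Sum>i<n. (real (degree n E i))^2 + real (degree n E i))"
    using laplacian_row_sum_squares[OF sg] by simp
  finally show ?thesis .
qed

lemma lap_eigenvalue_eigenfunction:
  assumes "simple_graph n E" and "\<mu> \<in># lap_spectrum n E"
  shows "\<exists>x. (\<exists>i<n. x i \<noteq> 0) \<and> (\<forall>i<n. (\<Sum>j<n. laplacian n E $$ (i,j) * x j) = \<mu> * x i)"
proof -
  obtain U ls where od: "orthogonal_diagonalization (laplacian n E) U ls n"
    and spec: "lap_spectrum n E = mset ls"
    using lap_spectrum_diagonalization[OF assms(1)] .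
  show ?thesis
    using orthogonal_diagonalization.eigenvalue_eigenfunction[OF od] assms(2) unfolding spec by simp
qed

lemma lap_zero_simple_if_kernel_constant:
  assumes "simple_graph n E"
    and "\<And>x. \<forall>i<n. (\<Sum>j<n. laplacian n E $$ (i,j) * x j) = 0 \<Longrightarrow> \<forall>i<n. x i = x 0"
  shows "count (lap_spectrum n E) 0 \<le> 1"
proof -
  obtain U ls where od: "orthogonal_diagonalization (laplacian n E) U ls n"
    and spec: "lap_spectrum n E = mset ls"
    using lap_spectrum_diagonalization[OF assms(1)] .
  show ?thesis
    unfolding spec by (rule orthogonal_diagonalization.zero_eigenvalue_simple[OF od assms(2)])
qed

lemma lap_quadratic_form_star:
  assumes sg: "simple_graph n E" and v: "v < n"
  defines "d \<equiv> real (degree n E v)"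
  defines "x \<equiv> \<lambda>i. (if i = v then d else 0) - (if E v i then 1 else 0)"
  shows "(\<Sum>i<n. (x i)^2) = d^2 + d"
    and "d * (d + 1)^2 \<le> (\<Sum>i<n. x i * (\<Sum>j<n. laplacian n E $$ (i,j) * x j))"
proof -
  have xv: "x v = d" unfolding x_def using simple_graph_irrefl[OF sg] by simp
  have xn: "E v j \<Longrightarrow> x j = -1" for j unfolding x_def using simple_graph_irrefl[OF sg] by auto
  have "(\<Sum>i<n. (x i)^2) = (\<Sum>i<n. (if i = v then d^2 else 0) + (if E v i then 1 else 0))"
    unfolding x_def using simple_graph_irrefl[OF sg] by (intro sum.cong refl) (auto simp: power2_eq_square)
  also have "\<dots> = d^2 + d" using v unfolding d_def real_degree_eq_sum by (simp add: sum.distrib sum.delta')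
  finally show "(\<Sum>i<n. (x i)^2) = d^2 + d" .
  define f where "f = (\<lambda>i j. if E i j then (x i - x j)^2 else (0::real))"
  have f0: "f i j \<ge> 0" for i j unfolding f_def by auto
  \<comment> \<open>Keep only the terms (v,j) and (i,v) of the double sum; each equals (d + 1)^2 on an edge.\<close>
  have s1: "(\<Sum>i<n. \<Sum>j<n. f i j) = (\<Sum>j<n. f v j) + (\<Sum>i\<in>{..<n}-{v}. \<Sum>j<n. f i j)"
    using v by (subst sum.remove[of _ v]) auto
  have s2: "(\<Sum>i\<in>{..<n}-{v}. f i v) \<le> (\<Sum>i\<in>{..<n}-{v}. \<Sum>j<n. f i j)"
    by (intro sum_mono member_le_sum) (use v f0 in auto)
  have "(\<Sum>i<n. f i v) = f v v + (\<Sum>i\<in>{..<n}-{v}. f i v)"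
    using v by (simp add: sum.remove)
  moreover have "f v v = 0" unfolding f_def using simple_graph_irrefl[OF sg] by simp
  ultimately have s3: "(\<Sum>i\<in>{..<n}-{v}. f i v) = (\<Sum>i<n. f i v)" by simp
  have fv: "(\<Sum>j<n. f v j) = d * (d+1)^2"
  proof -
    have "(\<Sum>j<n. f v j) = (\<Sum>j<n. (if E v j then 1 else 0) * (d+1)^2)"
      unfolding f_def using xv xn by (intro sum.cong refl) auto
    also have "\<dots> = d * (d+1)^2" unfolding d_def real_degree_eq_sum by (rule sum_distrib_right[symmetric])
    finally show ?thesis .
  qed
  have "(\<Sum>i<n. f i v) = (\<Sum>j<n. f v j)"
  proof (intro sum.cong refl)
    fix i
    have "E i v = E v i" using simple_graph_sym[OF sg] by blast
    then show "f i v = f v i" unfolding f_def by (simp add: power2_commute)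
  qed
  then have "2 * (d * (d+1)^2) \<le> (\<Sum>i<n. \<Sum>j<n. f i j)" using s1 s2 s3 fv by linarith
  then show "d * (d + 1)^2 \<le> (\<Sum>i<n. x i * (\<Sum>j<n. laplacian n E $$ (i,j) * x j))"
    unfolding laplacian_quadratic_form[OF sg] f_def by simp
qed

lemma lap_eigenvalue_ge_degree_plus_one:
  assumes sg: "simple_graph n E" and v: "v < n" and d1: "degree n E v \<ge> 1"
  shows "\<exists>\<mu>\<in>#lap_spectrum n E. real (degree n E v) + 1 \<le> \<mu>"
proof -
  obtain U ls where od: "orthogonal_diagonalization (laplacian n E) U ls n"
    and spec: "lap_spectrum n E = mset ls"
    using lap_spectrum_diagonalization[OF sg] .
  have len: "length ls = n" using orthogonal_diagonalization.length_ls[OF od] .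
  define c where "c = Max (set ls)"
  have c: "c \<in> set ls" unfolding c_def using v len by (intro Max_in) auto
  have le: "\<forall>k<n. ls ! k \<le> c" unfolding c_def using len by auto
  define d where "d = real (degree n E v)"
  note star = lap_quadratic_form_star[OF sg v]
  have "d * (d + 1)^2 \<le> c * (d^2 + d)"
    using order.trans[OF star(2) orthogonal_diagonalization.quadratic_form_le[OF od le]] star(1)
    unfolding d_def by simp
  then have "(d + 1) * (d * (d + 1)) \<le> c * (d * (d + 1))"
    by (simp only: power2_eq_square mult.assoc mult.left_commute distrib_left distrib_right
        mult_1_left mult_1_right)
  moreover have "d * (d + 1) > 0" using d1 unfolding d_def by simp
  ultimately have "real (degree n E v) + 1 \<le> c" unfolding d_def by (rule mult_right_le_imp_le)
  then show ?thesis using c unfolding spec by auto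
qed

text \<open>Testing the Laplacian with the indicator of v: its Rayleigh quotient is the degree d
  and the squared norm of its image is d^2 + d.\<close>
lemma lap_spectral_gap_degree_bound:
  assumes sg: "simple_graph n E" and v: "v < n" and ab: "a \<le> b"
    and gap: "\<forall>\<mu>\<in>#lap_spectrum n E. \<mu> \<le> a \<or> b \<le> \<mu>"
  shows "(real (degree n E v) - a) * (b - real (degree n E v)) \<le> real (degree n E v)"
proof -
  obtain U ls where od: "orthogonal_diagonalization (laplacian n E) U ls n"
    and spec: "lap_spectrum n E = mset ls"
    using lap_spectrum_diagonalization[OF sg] .
  have gap': "\<forall>k<n. ls ! k \<le> a \<or> b \<le> ls ! k"
    using gap orthogonal_diagonalization.length_ls[OF od] unfolding spec by auto
  define d where "d = real (degree n E v)"
  define L where "L = laplacian n E"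
  define x where "x = (\<lambda>i. if i = v then 1 else (0::real))"
  have Lx: "(\<Sum>j<n. L $$ (i,j) * x j) = L $$ (i,v)" if "i < n" for i
    using v by (simp add: x_def if_distrib sum.delta' cong: if_cong)
  have "(\<Sum>i<n. (x i)^2) = (\<Sum>i<n. if i = v then 1 else 0)" unfolding x_def by (intro sum.cong) auto
  then have "(\<Sum>i<n. (x i)^2) = 1" using v by (simp add: sum.delta')
  moreover have "(\<Sum>i<n. x i * (\<Sum>j<n. L $$ (i,j) * x j)) = d"
  proof -
    have "(\<Sum>i<n. x i * (\<Sum>j<n. L $$ (i,j) * x j)) = (\<Sum>i<n. if i = v then L $$ (v,v) else 0)"
      by (intro sum.cong refl) (use Lx in \<open>auto simp: x_def\<close>)
    then show ?thesis using v simple_graph_irrefl[OF sg] by (simp add: sum.delta' L_def laplacian_index d_def)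
  qed
  moreover have "(\<Sum>i<n. (\<Sum>j<n. L $$ (i,j) * x j)^2) = d^2 + d"
  proof -
    have "L $$ (i,v) = L $$ (v,i)" if "i < n" for i
      using laplacian_symmetric[OF sg] that v unfolding L_def
      by (metis index_transpose_mat(1) laplacian_carrier carrier_matD)
    then have "(\<Sum>i<n. (\<Sum>j<n. L $$ (i,j) * x j)^2) = (\<Sum>j<n. (L $$ (v,j))^2)"
      using Lx by simp
    then show ?thesis using laplacian_row_sum_squares[OF sg v] unfolding L_def d_def by simp
  qed
  ultimately have "(a + b) * d \<le> d^2 + d + a * b"
    using orthogonal_diagonalization.spectral_gap_quadratic_inequality[OF od gap' ab, of x]
    unfolding L_def by simp
  then show ?thesis unfolding d_def[symmetric] by (simp add: algebra_simps power2_eq_square)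
qed

lemma isolated_vertex_lap_zero_multiplicity:
  assumes sg: "simple_graph n E" and v: "v < n" and w: "w < n" "w \<noteq> v"
    and d0: "degree n E v = 0"
  shows "2 \<le> count (lap_spectrum n E) 0"
proof (rule ccontr)
  obtain U ls where od: "orthogonal_diagonalization (laplacian n E) U ls n"
    and spec: "lap_spectrum n E = mset ls"
    using lap_spectrum_diagonalization[OF sg] .
  assume "\<not> ?thesis"
  then have zero: "count (mset ls) 0 \<le> 1" unfolding spec by simp
  have nov: "\<not> E j v" for j
  proof
    assume "E j v"
    then have "j \<in> {j. j < n \<and> E v j}" using simple_graph_sym[OF sg] simple_graph_bound[OF sg] by blast
    then show False using d0 unfolding degree_def by (auto simp: card_eq_0_iff)
  qed
  \<comment> \<open>The indicator of v and of its complement both lie in the kernel.\<close>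
  define x where "x = (\<lambda>i. if i = v then 1 else (0::real))"
  define y where "y = (\<lambda>i. if i = v then 0 else (1::real))"
  have "\<forall>i<n. (\<Sum>j<n. laplacian n E $$ (i,j) * x j) = 0"
  proof (intro allI impI)
    fix i assume i: "i < n"
    have "(\<Sum>j<n. if E i j then x j else 0) = 0" unfolding x_def using nov by (intro sum.neutral) auto
    moreover have "real (degree n E i) * x i = 0" using d0 unfolding x_def by auto
    ultimately show "(\<Sum>j<n. laplacian n E $$ (i,j) * x j) = 0" unfolding laplacian_mult_row[OF i] by simp
  qed
  moreover have "\<forall>i<n. (\<Sum>j<n. laplacian n E $$ (i,j) * y j) = 0"
  proof (intro allI impI)
    fix i assume i: "i < n"
    have "(\<Sum>j<n. if E i j then y j else 0) = real (degree n E i)"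
      unfolding real_degree_eq_sum y_def using nov by (intro sum.cong) auto
    moreover have "real (degree n E i) * y i = real (degree n E i)" using d0 unfolding y_def by auto
    ultimately show "(\<Sum>j<n. laplacian n E $$ (i,j) * y j) = 0" unfolding laplacian_mult_row[OF i] by simp
  qed
  ultimately have "y w * x v = y v * x w"
    by (rule orthogonal_diagonalization.kernel_vectors_proportional[OF od zero _ _ v _ w(1)])
      (simp add: x_def)
  then show False using w by (simp add: x_def y_def)
qed

lemma two_mul_degree_sum_le:
  assumes sg: "simple_graph n E" and X: "X \<subseteq> {..<n}"
  shows "2 * (\<Sum>i\<in>X. degree n E i) \<le> card X * (card X - 1) + (\<Sum>i<n. degree n E i)"
proof -
  define e where "e = (\<lambda>i j. if E i j then 1 else (0::nat))"
  define Y where "Y = {..<n} - X"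
  have fX: "finite X" using X finite_subset by blast
  have fY: "finite Y" unfolding Y_def by simp
  have XY: "{..<n} = X \<union> Y" "X \<inter> Y = {}" using X unfolding Y_def by auto
  have split: "(\<Sum>j<n. g j) = (\<Sum>j\<in>X. g j) + (\<Sum>j\<in>Y. g j)" for g :: "nat \<Rightarrow> nat"
    unfolding XY(1) by (rule sum.union_disjoint[OF fX fY XY(2)])
  define A where "A = (\<Sum>i\<in>X. \<Sum>j\<in>X. e i j)"
  define B where "B = (\<Sum>i\<in>X. \<Sum>j\<in>Y. e i j)"
  have degX: "(\<Sum>i\<in>X. degree n E i) = A + B"
    unfolding A_def B_def degree_eq_sum e_def by (simp add: split sum.distrib)
  have B': "(\<Sum>i\<in>Y. \<Sum>j\<in>X. e i j) = B"
  proof -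
    have "(\<Sum>i\<in>Y. \<Sum>j\<in>X. e i j) = (\<Sum>j\<in>X. \<Sum>i\<in>Y. e i j)" by (rule sum.swap)
    also have "\<dots> = B" unfolding B_def e_def using simple_graph_sym[OF sg] by (intro sum.cong refl) auto
    finally show ?thesis .
  qed
  have tot: "(\<Sum>i<n. degree n E i) = A + B + (\<Sum>i\<in>Y. \<Sum>j\<in>X. e i j) + (\<Sum>i\<in>Y. \<Sum>j\<in>Y. e i j)"
  proof -
    have "(\<Sum>i<n. degree n E i) = (\<Sum>i\<in>X. degree n E i) + (\<Sum>i\<in>Y. degree n E i)" by (rule split)
    also have "(\<Sum>i\<in>Y. degree n E i) = (\<Sum>i\<in>Y. \<Sum>j\<in>X. e i j) + (\<Sum>i\<in>Y. \<Sum>j\<in>Y. e i j)"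
      unfolding degree_eq_sum e_def by (simp add: split sum.distrib)
    finally show ?thesis using degX by simp
  qed
  have Ale: "A \<le> card X * (card X - 1)"
  proof -
    have "A \<le> (\<Sum>i\<in>X. card X - 1)"
      unfolding A_def
    proof (rule sum_mono)
      fix i assume i: "i \<in> X"
      have "(\<Sum>j\<in>X. e i j) = (\<Sum>j\<in>X - {i}. e i j) + e i i"
        using i fX by (simp add: sum.remove add.commute)
      also have "e i i = 0" unfolding e_def using simple_graph_irrefl[OF sg] by simp
      also have "(\<Sum>j\<in>X - {i}. e i j) \<le> (\<Sum>j\<in>X - {i}. 1)" unfolding e_def by (intro sum_mono) auto
      also have "\<dots> = card X - 1" using i fX by simp
      finally show "(\<Sum>j\<in>X. e i j) \<le> card X - 1" by simp
    qed
    also have "\<dots> = card X * (card X - 1)" by simp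
    finally show ?thesis .
  qed
  show ?thesis using degX tot B' Ale by simp
qed
section \<open>The Laplacian spectrum of B'(p,q,p)\<close>

abbreviation B' :: "nat \<Rightarrow> nat \<Rightarrow> nat \<Rightarrow> nat \<Rightarrow> bool" where
  "B' p q \<equiv> binary_star'_edge p q p"

lemma B'_iff: "B' p q i j \<longleftrightarrow>
   (i = 0 \<and> 2 \<le> j \<and> j \<le> q+1) \<or> (i = 1 \<and> 2 \<le> j \<and> j \<le> q+1) \<or>
   (i = 0 \<and> q+2 \<le> j \<and> j \<le> p+q+1) \<or> (i = 1 \<and> p+q+2 \<le> j \<and> j \<le> p+q+p+1) \<or>
   (j = 0 \<and> 2 \<le> i \<and> i \<le> q+1) \<or> (j = 1 \<and> 2 \<le> i \<and> i \<le> q+1) \<or>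
   (j = 0 \<and> q+2 \<le> i \<and> i \<le> p+q+1) \<or> (j = 1 \<and> p+q+2 \<le> i \<and> i \<le> p+q+p+1) \<or>
   (i = 0 \<and> j = 1) \<or> (i = 1 \<and> j = 0)"
  unfolding binary_star'_edge_def binary_star_edge_def Let_def by (rule iffI; elim disjE; simp)

lemma B'_simple_graph: "simple_graph (2*p+q+2) (B' p q)"
  unfolding simple_graph_def B'_iff by (intro allI impI; elim disjE) simp_all

lemma B'_adj_u: "B' p q 0 j \<longleftrightarrow> 1 \<le> j \<and> j \<le> p+q+1"
  by (simp add: B'_iff; arith)

lemma B'_adj_v: "B' p q 1 j \<longleftrightarrow> j = 0 \<or> (2 \<le> j \<and> j \<le> q+1) \<or> (p+q+2 \<le> j \<and> j \<le> 2*p+q+1)"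
  by (simp add: B'_iff; arith)

lemma B'_adj_common: "2 \<le> i \<Longrightarrow> i \<le> q+1 \<Longrightarrow> B' p q i j \<longleftrightarrow> j = 0 \<or> j = 1"
  by (simp add: B'_iff; arith)

lemma B'_adj_u_leaf: "q+2 \<le> i \<Longrightarrow> i \<le> p+q+1 \<Longrightarrow> B' p q i j \<longleftrightarrow> j = 0"
  by (simp add: B'_iff; arith)

lemma B'_adj_v_leaf: "p+q+2 \<le> i \<Longrightarrow> i \<le> 2*p+q+1 \<Longrightarrow> B' p q i j \<longleftrightarrow> j = 1"
  by (simp add: B'_iff; arith)

lemma B'_vertex_cases:
  fixes i p q :: nat
  assumes "i < 2*p+q+2"
  obtains "i = 0" | "i = 1" | "2 \<le> i" "i \<le> q+1" | "q+2 \<le> i" "i \<le> p+q+1"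
    | "p+q+2 \<le> i" "i \<le> 2*p+q+1"
  using assms by linarith

lemma B'_neighbours_u: "{j. j < 2*p+q+2 \<and> B' p q 0 j} = {1..p+q+1}"
  unfolding B'_adj_u by auto

lemma B'_neighbours_v:
  "{j. j < 2*p+q+2 \<and> B' p q 1 j} = insert 0 ({2..q+1} \<union> {p+q+2..2*p+q+1})"
  unfolding B'_adj_v by auto

lemma B'_neighbours_common: "2 \<le> i \<Longrightarrow> i \<le> q+1 \<Longrightarrow> {j. j < 2*p+q+2 \<and> B' p q i j} = {0,1}"
  by (auto simp: B'_adj_common)

lemma B'_neighbours_u_leaf: "q+2 \<le> i \<Longrightarrow> i \<le> p+q+1 \<Longrightarrow> {j. j < 2*p+q+2 \<and> B' p q i j} = {0}"
  by (auto simp: B'_adj_u_leaf)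

lemma B'_neighbours_v_leaf:
  "p+q+2 \<le> i \<Longrightarrow> i \<le> 2*p+q+1 \<Longrightarrow> {j. j < 2*p+q+2 \<and> B' p q i j} = {1}"
  by (auto simp: B'_adj_v_leaf)

lemma B'_degree:
  assumes i: "i < 2*p+q+2"
  shows "degree (2*p+q+2) (B' p q) i = (if i \<le> 1 then p+q+1 else if i \<le> q+1 then 2 else 1)"
  using i
proof (cases rule: B'_vertex_cases)
  case 1
  then show ?thesis unfolding degree_def using B'_neighbours_u[of p q] by simp
next
  case 2
  have "card (insert 0 ({2..q+1} \<union> {p+q+2..2*p+q+1})) = 1 + (card {2..q+1} + card {p+q+2..2*p+q+1})"
    by (subst card_insert_disjoint) (auto simp: card_Un_disjoint)
  then show ?thesis unfolding degree_def using 2 B'_neighbours_v[of p q] by simp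
next
  case 3
  then show ?thesis unfolding degree_def using B'_neighbours_common[of i q p] by simp
next
  case 4
  then show ?thesis unfolding degree_def using B'_neighbours_u_leaf[of q i p] by simp
next
  case 5
  then show ?thesis unfolding degree_def using B'_neighbours_v_leaf[of p q i] by simp
qed

lemma B'_degree_list:
  "map (degree (2*p+q+2) (B' p q)) [0..<2*p+q+2] = [p+q+1, p+q+1] @ replicate q 2 @ replicate (2*p) 1"
proof (rule nth_equalityI)
  fix i assume "i < length (map (degree (2*p+q+2) (B' p q)) [0..<2*p+q+2])"
  then have i: "i < 2*p+q+2" by simp
  then have "map (degree (2*p+q+2) (B' p q)) [0..<2*p+q+2] ! i = degree (2*p+q+2) (B' p q) i"
    by (metis add_0 diff_zero length_upt nth_map nth_upt)
  also have "\<dots> = (if i \<le> 1 then p+q+1 else if i \<le> q+1 then 2 else 1)" by (rule B'_degree[OF i])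
  also have "\<dots> = ([p+q+1, p+q+1] @ replicate q 2 @ replicate (2*p) 1) ! i"
    using i by (auto simp: nth_append nth_Cons')
  finally show "map (degree (2*p+q+2) (B' p q)) [0..<2*p+q+2] ! i
      = ([p+q+1, p+q+1] @ replicate q 2 @ replicate (2*p) 1) ! i" .
qed simp

lemma B'_degree_sums:
  "(\<Sum>i<2*p+q+2. degree (2*p+q+2) (B' p q) i) = 2*(p+q+1) + 2*q + 2*p"
  "(\<Sum>i<2*p+q+2. (degree (2*p+q+2) (B' p q) i)^2) = 2*(p+q+1)^2 + 4*q + 2*p"
proof -
  have sum_list_eq: "(\<Sum>i<n. g i) = sum_list (map g [0..<n])" for g :: "nat \<Rightarrow> nat" and n
    unfolding interv_sum_list_conv_sum_set_nat set_upt lessThan_atLeast0 ..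
  show "(\<Sum>i<2*p+q+2. degree (2*p+q+2) (B' p q) i) = 2*(p+q+1) + 2*q + 2*p"
    unfolding sum_list_eq using B'_degree_list[of p q] by (simp add: sum_list_replicate)
  show "(\<Sum>i<2*p+q+2. (degree (2*p+q+2) (B' p q) i)^2) = 2*(p+q+1)^2 + 4*q + 2*p"
    unfolding sum_list_eq using B'_degree_list[of p q, THEN arg_cong[of _ _ "map (\<lambda>d. d^2)"]]
    by (simp add: sum_list_replicate comp_def)
qed

lemma B'_eigenvector_equations:
  fixes l :: real
  assumes ev: "\<forall>i<2*p+q+2. (\<Sum>j<2*p+q+2. laplacian (2*p+q+2) (B' p q) $$ (i,j) * x j) = l * x i"
  shows "\<And>i. 2 \<le> i \<Longrightarrow> i \<le> q+1 \<Longrightarrow> (2 - l) * x i = x 0 + x 1"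
    and "\<And>i. q+2 \<le> i \<Longrightarrow> i \<le> p+q+1 \<Longrightarrow> (1 - l) * x i = x 0"
    and "\<And>i. p+q+2 \<le> i \<Longrightarrow> i \<le> 2*p+q+1 \<Longrightarrow> (1 - l) * x i = x 1"
    and "real (p+q+1) * x 0 - (x 1 + sum x {2..q+1} + sum x {q+2..p+q+1}) = l * x 0"
    and "real (p+q+1) * x 1 - (x 0 + sum x {2..q+1} + sum x {p+q+2..2*p+q+1}) = l * x 1"
proof -
  have row: "real (degree (2*p+q+2) (B' p q) i) * x i - sum x {j. j < 2*p+q+2 \<and> B' p q i j} = l * x i"
    if "i < 2*p+q+2" for i
    using ev that laplacian_mult_row[OF that, of "B' p q" x] sum_if_adjacent[of "B' p q" i x] by simp
  show "(2 - l) * x i = x 0 + x 1" if "2 \<le> i" "i \<le> q+1" for i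
    using row[of i] that B'_degree[of i p q] B'_neighbours_common[OF that, of p] by (simp add: algebra_simps)
  show "(1 - l) * x i = x 0" if "q+2 \<le> i" "i \<le> p+q+1" for i
    using row[of i] that B'_degree[of i p q] B'_neighbours_u_leaf[OF that] by (simp add: algebra_simps)
  show "(1 - l) * x i = x 1" if "p+q+2 \<le> i" "i \<le> 2*p+q+1" for i
    using row[of i] that B'_degree[of i p q] B'_neighbours_v_leaf[OF that] by (simp add: algebra_simps)
  have "{1..p+q+1} = insert 1 ({2..q+1} \<union> {q+2..p+q+1})" by auto
  then have "sum x {1..p+q+1} = x 1 + sum x {2..q+1} + sum x {q+2..p+q+1}"
    by (simp add: sum.union_disjoint)
  then show "real (p+q+1) * x 0 - (x 1 + sum x {2..q+1} + sum x {q+2..p+q+1}) = l * x 0"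
    using row[of 0] B'_degree[of 0 p q] B'_neighbours_u[of p q] by simp
  have "sum x (insert 0 ({2..q+1} \<union> {p+q+2..2*p+q+1})) = x 0 + sum x {2..q+1} + sum x {p+q+2..2*p+q+1}"
    by (simp add: sum.union_disjoint)
  then show "real (p+q+1) * x 1 - (x 0 + sum x {2..q+1} + sum x {p+q+2..2*p+q+1}) = l * x 1"
    using row[of 1] B'_degree[of 1 p q] B'_neighbours_v[of p q] by simp
qed

lemma B'_eigenvalue_quadratics:
  fixes l :: real
  assumes ev: "\<forall>i<2*p+q+2. (\<Sum>j<2*p+q+2. laplacian (2*p+q+2) (B' p q) $$ (i,j) * x j) = l * x i"
    and nz: "\<exists>i<2*p+q+2. x i \<noteq> 0" and l2: "l > 2"
  shows "l^2 - (real (p+q+1) + 2) * l + real (2*p+q+2) = 0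
     \<or> l^2 - (real (p+q+1) + 2) * l + (real q + 2) = 0"
proof (rule ccontr)
  assume quad: "\<not> ?thesis"
  note eqs = B'_eigenvector_equations[OF ev]
  define a b where "a = x 0" and "b = x 1"
  define SW SU SV where "SW = sum x {2..q+1}" and "SU = sum x {q+2..p+q+1}"
    and "SV = sum x {p+q+2..2*p+q+1}"
  define D where "D = real (p+q+1)"
  have hW: "(2 - l) * SW = real q * (a + b)" unfolding SW_def a_def b_def sum_distrib_left
    using eqs(1) by (simp add: sum.cong[of _ _ _ "\<lambda>_. x 0 + x 1"])
  have hU: "(1 - l) * SU = real p * a" unfolding SU_def a_def sum_distrib_left
    using eqs(2) by (simp add: sum.cong[of _ _ _ "\<lambda>_. x 0"])
  have hV: "(1 - l) * SV = real p * b" unfolding SV_def b_def sum_distrib_left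
    using eqs(3) by (simp add: sum.cong[of _ _ _ "\<lambda>_. x 1"])
  have E0: "D * a - (b + SW + SU) = l * a" and E1: "D * b - (a + SW + SV) = l * b"
    using eqs(4,5) unfolding a_def b_def SW_def SU_def SV_def D_def .
  have D: "D = real p + real q + 1" unfolding D_def by simp
  \<comment> \<open>Eliminating SW, SU, SV leaves the antisymmetric part a - b and the symmetric part a + b.\<close>
  have "(a-b)*(2-l)*(l^2-(D+2)*l+(real q+2)) =
     (1-l)*(2-l)*((D*a-(b+SW+SU)-l*a)-(D*b-(a+SW+SV)-l*b)) + (2-l)*((1-l)*SU-real p*a)
     - (2-l)*((1-l)*SV-real p*b)"
    unfolding D by (simp add: algebra_simps power2_eq_square)
  then have "(a-b)*(2-l)*(l^2-(D+2)*l+(real q+2)) = 0" using E0 E1 hU hV by simp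
  then have ab1: "a - b = 0" using quad l2 unfolding D_def by simp
  have "(a+b)*l*(l^2-(D+2)*l+real (2*p+q+2)) =
     -((1-l)*(2-l)*((D*a-(b+SW+SU)-l*a)+(D*b-(a+SW+SV)-l*b)) + 2*(1-l)*((2-l)*SW-real q*(a+b))
       + (2-l)*((1-l)*SU-real p*a) + (2-l)*((1-l)*SV-real p*b))"
    unfolding D by (simp add: algebra_simps power2_eq_square)
  then have "(a+b)*l*(l^2-(D+2)*l+real (2*p+q+2)) = 0" using E0 E1 hU hV hW by simp
  then have "a + b = 0" using quad l2 unfolding D_def by simp
  with ab1 have "x 0 = 0" "x 1 = 0" unfolding a_def b_def by simp_all
  moreover have "x i = 0" if "i < 2*p+q+2" for i
    using that
  proof (cases rule: B'_vertex_cases)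
    case 3 with eqs(1)[of i] \<open>x 0 = 0\<close> \<open>x 1 = 0\<close> l2 show ?thesis by simp
  next
    case 4 with eqs(2)[of i] \<open>x 0 = 0\<close> l2 show ?thesis by simp
  next
    case 5 with eqs(3)[of i] \<open>x 1 = 0\<close> l2 show ?thesis by simp
  qed (use \<open>x 0 = 0\<close> \<open>x 1 = 0\<close> in simp_all)
  ultimately show False using nz by blast
qed

lemma B'_kernel_constant:
  assumes ev: "\<forall>i<2*p+q+2. (\<Sum>j<2*p+q+2. laplacian (2*p+q+2) (B' p q) $$ (i,j) * x j) = 0"
  shows "\<forall>i<2*p+q+2. x i = x 0"
proof -
  let ?N = "2*p+q+2"
  have "(\<Sum>i<?N. x i * (\<Sum>j<?N. laplacian ?N (B' p q) $$ (i,j) * x j)) = 0" using ev by simp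
  then have "(\<Sum>i<?N. \<Sum>j<?N. if B' p q i j then (x i - x j)^2 else 0) = 0"
    unfolding laplacian_quadratic_form[OF B'_simple_graph] by simp
  moreover
  define f where "f = (\<lambda>i. (\<Sum>j<?N. if B' p q i j then (x i - x j)^2 else (0::real)))"
  have nn: "0 \<le> f i" for i unfolding f_def by (rule sum_nonneg) simp
  have iff: "(\<Sum>i<?N. f i) = 0 \<longleftrightarrow> (\<forall>i\<in>{..<?N}. f i = 0)"
    by (rule sum_nonneg_eq_0_iff) (auto intro: nn)
  ultimately have "\<forall>i\<in>{..<?N}. (\<Sum>j<?N. if B' p q i j then (x i - x j)^2 else 0) = 0"
    unfolding f_def by blast
  then have eq: "B' p q i j \<Longrightarrow> x i = x j" for i j
  proof -
    assume h: "\<forall>i\<in>{..<?N}. (\<Sum>j<?N. if B' p q i j then (x i - x j)^2 else 0) = 0" and e: "B' p q i j"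
    have ij: "i < ?N" "j < ?N" using B'_simple_graph[of p q] e unfolding simple_graph_def by blast+
    then have "(\<Sum>j<?N. if B' p q i j then (x i - x j)^2 else 0) = 0" using h by auto
    then have "\<forall>k\<in>{..<?N}. (if B' p q i k then (x i - x k)^2 else 0) = 0"
      by (subst (asm) sum_nonneg_eq_0_iff) auto
    then have "(if B' p q i j then (x i - x j)^2 else 0) = 0" using ij(2) by blast
    then show "x i = x j" using e by simp
  qed
  show ?thesis
  proof (intro allI impI)
    fix i assume i: "i < ?N"
    have x1: "x 1 = x 0" using eq[of 0 1] B'_adj_u[of p q 1] by simp
    show "x i = x 0"
    proof (cases "i = 0")
      case False
      show ?thesis
      proof (cases "i \<le> p+q+1")
        case True then show ?thesis using eq[of 0 i] B'_adj_u[of p q i] False by simp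
      next
        case False
        then have "B' p q 1 i" using i unfolding B'_adj_v by simp
        then show ?thesis using eq[of 1 i] x1 by simp
      qed
    qed simp
  qed
qed

lemma B'_lap_zero_simple: "count (lap_spectrum (2*p+q+2) (B' p q)) 0 \<le> 1"
  by (rule lap_zero_simple_if_kernel_constant[OF B'_simple_graph B'_kernel_constant])

text \<open>D + spectral_excess D q is the root above 2 of the first quadratic of
  B'_eigenvalue_quadratics, where D = p + q + 1.\<close>
definition spectral_excess :: "real \<Rightarrow> real \<Rightarrow> real" where
  "spectral_excess D q = (sqrt ((D-2)^2 + 4*q) - (D-2)) / 2"

lemma spectral_excess_eq:
  assumes "q \<ge> 0"
  shows "(spectral_excess D q)^2 + (D-2) * spectral_excess D q = q"
proof -
  have "(sqrt ((D-2)^2 + 4*q))^2 = (D-2)^2 + 4*q" using assms by simp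
  then show ?thesis unfolding spectral_excess_def by (simp add: power2_eq_square field_simps)
qed

lemma spectral_excess_pos:
  assumes "q > 0" "D \<ge> 2"
  shows "spectral_excess D q > 0"
proof -
  have "sqrt ((D-2)^2) < sqrt ((D-2)^2 + 4*q)" using assms by (intro real_sqrt_less_mono) simp
  then show ?thesis unfolding spectral_excess_def using assms by simp
qed

lemma spectral_excess_le_one:
  assumes "q > 0" "D \<ge> 2" "q \<le> D - 1"
  shows "spectral_excess D q \<le> 1"
proof (rule ccontr)
  let ?t = "spectral_excess D q"
  assume "\<not> ?t \<le> 1"
  then have "?t^2 > 1" and "(D-2) * ?t \<ge> D - 2"
    using assms by (auto simp: power2_eq_square less_1_mult mult_le_cancel_left1)
  then show False using spectral_excess_eq[of q D] assms by simp
qed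

lemma B'_lap_eigenvalue_bounds:
  assumes q: "q \<ge> 1" and \<mu>: "\<mu> \<in># lap_spectrum (2*p+q+2) (B' p q)"
  defines "D \<equiv> real (p+q+1)"
  shows "\<mu> \<le> 2 \<or> (D + spectral_excess D (real q) \<le> \<mu> \<and> \<mu> < D + 2)"
proof (cases "\<mu> \<le> 2")
  case False
  then have l2: "\<mu> > 2" by simp
  define t where "t = spectral_excess D (real q)"
  have teq: "t^2 + (D-2)*t = real q" unfolding t_def by (rule spectral_excess_eq) simp
  have tpos: "t > 0" unfolding t_def D_def by (rule spectral_excess_pos) (use q in auto)
  have tle: "t \<le> 1" unfolding t_def D_def by (rule spectral_excess_le_one) (use q in auto)
  obtain x where "\<exists>i<2*p+q+2. x i \<noteq> 0"
    and "\<forall>i<2*p+q+2. (\<Sum>j<2*p+q+2. laplacian (2*p+q+2) (B' p q) $$ (i,j) * x j) = \<mu> * x i"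
    using lap_eigenvalue_eigenfunction[OF B'_simple_graph \<mu>] by blast
  from B'_eigenvalue_quadratics[OF this(2,1) l2]
  have "D + t \<le> \<mu> \<and> \<mu> < D + 2"
  proof (elim disjE)
    assume h: "\<mu>^2 - (real (p+q+1) + 2) * \<mu> + real (2*p+q+2) = 0"
    \<comment> \<open>Its roots are D + t and 2 - t.\<close>
    have "(\<mu> - (D + t)) * (\<mu> + t - 2) = 0"
      using h teq unfolding D_def by (simp add: algebra_simps power2_eq_square)
    then have "\<mu> = D + t" using l2 tpos by simp
    then show ?thesis using tle by simp
  next
    assume h: "\<mu>^2 - (real (p+q+1) + 2) * \<mu> + (real q + 2) = 0"
    have p: "(\<mu> - 1) * (\<mu> - D - 1) = real p" and q2: "\<mu> * (D + 2 - \<mu>) = real q + 2"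
      using h unfolding D_def by (simp_all add: algebra_simps power2_eq_square)
    have "D + 1 \<le> \<mu>"
    proof (rule ccontr)
      assume "\<not> D + 1 \<le> \<mu>"
      then have "(\<mu> - 1) * (\<mu> - D - 1) < 0" using l2 by (simp add: mult_pos_neg)
      then show False using p by simp
    qed
    moreover have "\<mu> < D + 2"
    proof (rule ccontr)
      assume "\<not> \<mu> < D + 2"
      then have "\<mu> * (D + 2 - \<mu>) \<le> 0" using l2 by (simp add: mult_nonneg_nonpos)
      then show False using q2 by simp
    qed
    ultimately show ?thesis using tle by simp
  qed
  then show ?thesis by (simp add: t_def)
qed simp
section \<open>Degree sequences compatible with the spectrum of B'(p,q,p)\<close>

lemma sum_by_values:
  assumes "finite I" "finite K" "\<forall>i\<in>I. f i \<in> K"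
  shows "(\<Sum>i\<in>I. g (f i)) = (\<Sum>k\<in>K. g k * card {i\<in>I. f i = k})"
proof -
  have "(\<Sum>i\<in>I. g (f i)) = (\<Sum>k\<in>K. \<Sum>i\<in>{i\<in>I. f i = k}. g (f i))"
    by (rule sum.group[symmetric]) (use assms in auto)
  also have "\<dots> = (\<Sum>k\<in>K. g k * card {i\<in>I. f i = k})"
    by (intro sum.cong refl) (simp add: mult.commute)
  finally show ?thesis .
qed

lemma gap_bound_middle_degree:
  fixes d D :: nat and t :: real
  assumes gap: "(real d - 2) * (real D + t - real d) \<le> real d" and t: "t > 0"
    and d: "3 \<le> d" "d + 2 \<le> D"
  shows "d = 3 \<and> D = 5"
proof -
  have "(real d - 2) * (real D - 1 - real d) + (real d - 2) * t \<le> 2"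
    using gap by (simp add: algebra_simps)
  moreover have "(real d - 2) * t > 0" using d t by simp
  moreover have "real ((d - 2) * (D - 1 - d)) = (real d - 2) * (real D - 1 - real d)" using d
    by (simp add: of_nat_diff)
  ultimately have lt: "(d - 2) * (D - 1 - d) < 2" by linarith
  have a1: "d - 2 \<ge> 1" and b1: "D - 1 - d \<ge> 1" using d by auto
  have "d - 2 \<le> 1"
  proof (rule ccontr)
    assume "\<not> d - 2 \<le> 1"
    then have "(d - 2) * (D - 1 - d) \<ge> 2 * 1" using b1 by (intro mult_le_mono) auto
    then show False using lt by simp
  qed
  moreover have "D - 1 - d \<le> 1"
  proof (rule ccontr)
    assume "\<not> D - 1 - d \<le> 1"
    then have "(d - 2) * (D - 1 - d) \<ge> 1 * 2" using a1 by (intro mult_le_mono) auto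
    then show False using lt by simp
  qed
  ultimately show ?thesis using d a1 b1 by auto
qed

text \<open>Combining the three moment equations as in the sum of (d_i - 1)(d_i - 2), which vanishes on
  the vertices of degree 1 and 2, leaves a relation between the counts of degrees D - 1 and D.\<close>
lemma degree_counts_relation:
  fixes p q c1 c2 cb ca D :: nat
  assumes D: "D = p+q+1" and D4: "4 \<le> D"
    and e1: "c1 + c2 + cb + ca = 2*p+q+2"
    and e2: "c1 + 2*c2 + (D-1)*cb + D*ca = 2*D+2*q+2*p"
    and e3: "c1 + 4*c2 + (D-1)^2*cb + D^2*ca = 2*D^2+4*q+2*p"
  shows "(int D - 3) * int cb + (int D - 1) * int ca = 2 * (int D - 1)"
proof -
  define d where "d = int D"
  have E1: "int c1 + int c2 + int cb + int ca = 2*int p + int q + 2" using e1 by linarith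
  have "int (c1 + 2*c2 + (D-1)*cb + D*ca) = int (2*D+2*q+2*p)" using e2 by simp
  then have E2: "int c1 + 2*int c2 + (d-1)*int cb + d*int ca = 2*d + 2*int q + 2*int p"
    using D4 unfolding d_def by (simp add: of_nat_diff)
  have "int (c1 + 4*c2 + (D-1)^2*cb + D^2*ca) = int (2*D^2+4*q+2*p)" using e3 by simp
  then have E3: "int c1 + 4*int c2 + (d-1)^2*int cb + d^2*int ca = 2*d^2 + 4*int q + 2*int p"
    using D4 unfolding d_def by (simp add: of_nat_diff)
  have "(d-2)*((d-3)*int cb + (d-1)*int ca - 2*(d-1)) =
     (int c1 + 4*int c2 + (d-1)^2*int cb + d^2*int ca - (2*d^2 + 4*int q + 2*int p))
     - 3*(int c1 + 2*int c2 + (d-1)*int cb + d*int ca - (2*d + 2*int q + 2*int p))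
     + 2*(int c1 + int c2 + int cb + int ca - (2*int p + int q + 2))"
    unfolding d_def D by (simp add: algebra_simps power2_eq_square)
  also have "\<dots> = 0" using E1 E2 E3 by simp
  finally show ?thesis using D4 unfolding d_def by simp
qed

lemma degree_counts_from_moments:
  fixes p q c1 c2 cb ca D :: nat and t :: real
  assumes D: "D = p+q+1" and D5: "D \<noteq> 5" and q: "q \<ge> 1" and n6: "2*p+q+2 \<ge> 6"
    and e1: "c1 + c2 + cb + ca = 2*p+q+2"
    and e2: "c1 + 2*c2 + (D-1)*cb + D*ca = 2*D+2*q+2*p"
    and e3: "c1 + 4*c2 + (D-1)^2*cb + D^2*ca = 2*D^2+4*q+2*p"
    and tb: "cb > 0 \<Longrightarrow> (real D - 3) * t \<le> 2" and t: "t > 0" "t^2 + (real D - 2)*t = real q"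
  shows "ca = 2 \<and> cb = 0 \<and> c2 = q \<and> c1 = 2*p"
proof -
  define d where "d = int p + int q + 1"
  have d4: "d \<ge> 4" using n6 q unfolding d_def by linarith
  have dD: "int D = d" unfolding d_def D by simp
  have E1: "int c1 + int c2 + int cb + int ca = 2*int p + int q + 2" using e1 by linarith
  have E2: "int c1 + 2*int c2 + (d-1)*int cb + d*int ca = 2*d + 2*int q + 2*int p"
  proof -
    have "int (c1 + 2*c2 + (D-1)*cb + D*ca) = int (2*D+2*q+2*p)" using e2 by simp
    then show ?thesis using d4 dD by (simp add: of_nat_diff)
  qed
  have key: "(d-3)*int cb + (d-1)*int ca = 2*(d-1)"
    using degree_counts_relation[OF D _ e1 e2 e3] d4 dD by simp
  have ca3: "int ca \<le> 2"
  proof (rule ccontr)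
    assume "\<not> int ca \<le> 2"
    then have "(d-1)*int ca \<ge> (d-1)*3" using d4 by (intro mult_left_mono) auto
    then have a: "(d-1)*int ca \<ge> 3*d - 3" by simp
    have b: "(d-3)*int cb \<ge> 0" using d4 by simp
    have c: "(d-3)*int cb + (d-1)*int ca = 2*d - 2" using key by simp
    from a b c d4 show False by linarith
  qed
  have "int ca = 2 \<or> int ca = 1 \<or> int ca = 0" using ca3 by linarith
  then show ?thesis
  proof (elim disjE)
    assume ca: "int ca = 2"
    then have "(d-3)*int cb = 0" using key by simp
    then have "cb = 0" using d4 by simp
    then show ?thesis using ca E1 E2 by simp
  next
    assume ca: "int ca = 1"
    then have k1: "(d-3)*int cb = d-1" using key by simp
    show ?thesis
    proof (cases "cb \<ge> 2")
      case True
      then have "(d-3)*int cb \<ge> (d-3)*2" using d4 by (intro mult_left_mono) auto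
      then have b: "(d-3)*int cb \<ge> 2*d - 6" by simp
      from b k1 have "d \<le> 5" by simp
      moreover have "d \<noteq> 5" using D5 dD by auto
      ultimately have d4': "d = 4" using d4 by simp
      then have "int cb = 3" using k1 by simp
      then show ?thesis using E1 E2 ca d4' d_def n6 by simp
    next
      case False
      then have "cb = 0 \<or> cb = 1" by auto
      then show ?thesis using k1 d4 by auto
    qed
  next
    assume ca: "int ca = 0"
    then have k0: "(d-3)*int cb = 2*(d-1)" using key by simp
    consider "cb \<le> 2" | "cb = 3" | "cb \<ge> 4" by linarith
    then show ?thesis
    proof cases
      case 1
      then have "(d-3)*int cb \<le> (d-3)*2" using d4 by (intro mult_left_mono) auto
      then have b: "(d-3)*int cb \<le> 2*d - 6" by simp
      have c: "(d-3)*int cb = 2*d - 2" using k0 by simp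
      from b c show ?thesis by simp
    next
      case 2
      then have d7: "d = 7" using k0 by simp
      then have "D = 7" using dD by simp
      then have "4 * t \<le> 2" using tb 2 by simp
      then have th: "t \<le> 1/2" by simp
      have "t^2 \<le> (1/2)^2" using th t(1) by (intro power_mono) auto
      then have "t^2 \<le> 1/4" by (simp add: power2_eq_square)
      then have "real q \<le> 11/4" using t(2) th \<open>D = 7\<close> by simp
      then have "q \<le> 2" by simp
      then show ?thesis using E1 E2 ca 2 d7 d_def by simp
    next
      case 3
      then have "(d-3)*int cb \<ge> (d-3)*4" using d4 by (intro mult_left_mono) auto
      then have b: "(d-3)*int cb \<ge> 4*d - 12" by simp
      have c: "(d-3)*int cb = 2*d - 2" using k0 by simp
      from b c have "d \<le> 5" by simp
      moreover have "d \<noteq> 5" using D5 dD by auto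
      ultimately have d4': "d = 4" using d4 by simp
      then have "int cb = 6" using k0 by simp
      then show ?thesis using E1 E2 ca d4' d_def by simp
    qed
  qed
qed

text \<open>For D = 5 the moment equations alone also admit the counts with four vertices of degree 4
  (and q = 4) or with degrees 5, 4, 4 among the high-degree vertices; the edge bound rules these out.\<close>
lemma degree_counts_from_moments_D5:
  fixes p q c1 c2 c3 c4 c5 :: nat
  assumes pq: "p + q = 4" and q: "q \<ge> 1"
    and e1: "c1 + c2 + c3 + c4 + c5 = 2*p+q+2"
    and e2: "c1 + 2*c2 + 3*c3 + 4*c4 + 5*c5 = 18"
    and e3: "c1 + 4*c2 + 9*c3 + 16*c4 + 25*c5 = 58 + 2*q"
    and eg: "2 * (4*c4 + 5*c5) \<le> (c4+c5) * (c4+c5-1) + 18"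
  shows "c5 = 2 \<and> c4 = 0 \<and> c3 = 0 \<and> c2 = q \<and> c1 = 2*p"
proof -
  have l1: "c3 + 3*c4 + 6*c5 = 12" using pq e1 e2 e3 by linarith
  have l2: "c2 + 2*c3 + 3*c4 + 4*c5 = 8 + q" using pq e1 e2 by linarith
  have "c5 \<le> 2" using l1 by linarith
  then consider "c5 = 0" | "c5 = 1" | "c5 = 2" by linarith
  then show ?thesis
  proof cases
    case 1
    then have "q = 4" "c2 = 0" "c3 = 0" using l1 l2 pq by linarith+
    then have "c4 = 4" using l1 1 by linarith
    then show ?thesis using eg 1 by simp
  next
    case 2
    then have "c4 \<le> 2" using l1 by linarith
    then consider "c4 = 0" | "c4 = 1" | "c4 = 2" by linarith
    then show ?thesis
    proof cases
      case 1 then show ?thesis using l1 l2 \<open>c5 = 1\<close> pq by linarith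
    next
      case 2 then show ?thesis using l1 l2 \<open>c5 = 1\<close> pq by linarith
    next
      case 3 then show ?thesis using eg \<open>c5 = 1\<close> by simp
    qed
  next
    case 3
    then have "c3 = 0" "c4 = 0" using l1 by linarith+
    then show ?thesis using 3 l2 e1 by linarith
  qed
qed


locale B'_degree_constraints =
  fixes p q :: nat and f :: "nat \<Rightarrow> nat" and t :: real
  assumes q: "1 \<le> q" and order: "6 \<le> 2*p+q+2"
    and lower: "\<And>i. i < 2*p+q+2 \<Longrightarrow> 1 \<le> f i"
    and upper: "\<And>i. i < 2*p+q+2 \<Longrightarrow> f i \<le> p+q+1"
    and gap: "\<And>i. i < 2*p+q+2 \<Longrightarrow> (real (f i) - 2) * (real (p+q+1) + t - real (f i)) \<le> real (f i)"
    and t_pos: "0 < t" and t_eq: "t^2 + (real (p+q+1) - 2) * t = real q"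
    and sum_f: "(\<Sum>i<2*p+q+2. f i) = 2*(p+q+1) + 2*q + 2*p"
    and sum_f_squares: "(\<Sum>i<2*p+q+2. (f i)^2) = 2*(p+q+1)^2 + 4*q + 2*p"
    and edge_bound: "\<And>X. X \<subseteq> {..<2*p+q+2} \<Longrightarrow>
      2 * (\<Sum>i\<in>X. f i) \<le> card X * (card X - 1) + (\<Sum>i<2*p+q+2. f i)"
begin

lemma value_counts_D_ne_5:
  assumes D_ne_5: "p+q+1 \<noteq> 5"
  shows "card {i\<in>{..<2*p+q+2}. f i = p+q+1} = 2 \<and> card {i\<in>{..<2*p+q+2}. f i = 2} = q
    \<and> card {i\<in>{..<2*p+q+2}. f i = 1} = 2*p \<and> (\<forall>i<2*p+q+2. f i = 1 \<or> f i = 2 \<or> f i = p+q+1)"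
proof -
  define N D where "N = 2*p+q+2" and "D = p+q+1"
  define cnt where "cnt = (\<lambda>k. card {i\<in>{..<N}. f i = k})"
  note defs = N_def[symmetric] D_def[symmetric]
  have lo': "\<forall>i<N. 1 \<le> f i" and hi': "\<forall>i<N. f i \<le> D" using lower upper unfolding defs by auto
  have gap': "\<forall>i<N. (real (f i) - 2) * (real D + t - real (f i)) \<le> real (f i)"
    using gap unfolding defs by auto
  have s1': "(\<Sum>i<N. f i) = 2*D + 2*q + 2*p" using sum_f unfolding defs .
  have s2': "(\<Sum>i<N. (f i)^2) = 2*D^2 + 4*q + 2*p" using sum_f_squares unfolding defs .
  have D4: "D \<ge> 4" using q order unfolding D_def by linarith
  have cntK: "cnt k = 0" if "\<forall>i<N. f i \<noteq> k" for k
    unfolding cnt_def using that by auto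
  note D_ne_5 = D_ne_5[folded D_def]
  have vals: "\<forall>i\<in>{..<N}. f i \<in> {1, 2, D-1, D}"
  proof
    fix i assume i: "i \<in> {..<N}"
    show "f i \<in> {1, 2, D-1, D}"
    proof (cases "3 \<le> f i \<and> f i + 2 \<le> D")
      case True
      then have "f i = 3 \<and> D = 5" using gap_bound_middle_degree[of "f i" D t] gap' i t_pos by auto
      then show ?thesis using D_ne_5 by simp
    next
      case False
      then show ?thesis using lo' hi' i by auto
    qed
  qed
  have grp: "(\<Sum>i<N. g (f i)) = g 1 * cnt 1 + g 2 * cnt 2 + g (D-1) * cnt (D-1) + g D * cnt D"
    for g :: "nat \<Rightarrow> nat"
  proof -
    have "(\<Sum>i<N. g (f i)) = (\<Sum>k\<in>{1, 2, D-1, D}. g k * cnt k)"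
      unfolding cnt_def by (rule sum_by_values) (use vals in auto)
    also have "\<dots> = g 1 * cnt 1 + g 2 * cnt 2 + g (D-1) * cnt (D-1) + g D * cnt D"
      using D4 by (simp add: add.assoc)
    finally show ?thesis .
  qed
  have e1: "cnt 1 + cnt 2 + cnt (D-1) + cnt D = 2*p+q+2"
    using grp[of "\<lambda>_. 1"] unfolding N_def by simp
  have e2: "cnt 1 + 2*cnt 2 + (D-1)*cnt (D-1) + D*cnt D = 2*D+2*q+2*p"
    using grp[of "\<lambda>k. k"] s1' by simp
  have e3: "cnt 1 + 4*cnt 2 + (D-1)^2*cnt (D-1) + D^2*cnt D = 2*D^2+4*q+2*p"
    using grp[of "\<lambda>k. k^2"] s2' by simp
  have tb: "(real D - 3) * t \<le> 2" if "cnt (D-1) > 0"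
  proof -
    have "\<not> (\<forall>i<N. f i \<noteq> D - 1)" using that cntK[of "D-1"] by auto
    then obtain i where i: "i < N" "f i = D - 1" by auto
    then have "(real D - 3) * (t + 1) \<le> real D - 1" using gap'[rule_format, OF i(1)] D4 by (simp add: of_nat_diff)
    then show ?thesis by (simp add: distrib_left)
  qed
  have r: "cnt D = 2 \<and> cnt (D-1) = 0 \<and> cnt 2 = q \<and> cnt 1 = 2*p"
    by (rule degree_counts_from_moments[OF D_def D_ne_5 q order e1 e2 e3 tb t_pos t_eq[folded D_def]])
  have "\<forall>i<N. f i = 1 \<or> f i = 2 \<or> f i = D"
  proof (intro allI impI)
    fix i assume i: "i < N"
    have "f i \<noteq> D - 1"
    proof
      assume "f i = D - 1"
      then have "{i\<in>{..<N}. f i = D - 1} \<noteq> {}" using i by auto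
      then have "cnt (D-1) > 0" unfolding cnt_def by (simp add: card_gt_0_iff)
      then show False using r by simp
    qed
    then show "f i = 1 \<or> f i = 2 \<or> f i = D" using vals i by auto
  qed
  then show ?thesis using r unfolding cnt_def N_def D_def by simp
qed

lemma value_counts_D_eq_5:
  assumes D_eq_5: "p+q+1 = 5"
  shows "card {i\<in>{..<2*p+q+2}. f i = p+q+1} = 2 \<and> card {i\<in>{..<2*p+q+2}. f i = 2} = q
    \<and> card {i\<in>{..<2*p+q+2}. f i = 1} = 2*p \<and> (\<forall>i<2*p+q+2. f i = 1 \<or> f i = 2 \<or> f i = p+q+1)"
proof -
  define N D where "N = 2*p+q+2" and "D = p+q+1"
  define cnt where "cnt = (\<lambda>k. card {i\<in>{..<N}. f i = k})"
  note defs = N_def[symmetric] D_def[symmetric]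
  have lo': "\<forall>i<N. 1 \<le> f i" and hi': "\<forall>i<N. f i \<le> D" using lower upper unfolding defs by auto
  have s1': "(\<Sum>i<N. f i) = 2*D + 2*q + 2*p" using sum_f unfolding defs .
  have s2': "(\<Sum>i<N. (f i)^2) = 2*D^2 + 4*q + 2*p" using sum_f_squares unfolding defs .
  note D_eq_5 = D_eq_5[folded D_def]
  then have pq: "p + q = 4" unfolding D_def by simp
  have vals: "\<forall>i\<in>{..<N}. f i \<in> {1, 2, 3, 4, 5}"
  proof
    fix i assume i: "i \<in> {..<N}"
    have "1 \<le> f i" "f i \<le> 5" using lo' hi' D_eq_5 i by auto
    then show "f i \<in> {1, 2, 3, 4, 5}" by auto
  qed
  have grp: "(\<Sum>i<N. g (f i)) = g 1 * cnt 1 + g 2 * cnt 2 + g 3 * cnt 3 + g 4 * cnt 4 + g 5 * cnt 5"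
    for g :: "nat \<Rightarrow> nat"
  proof -
    have "(\<Sum>i<N. g (f i)) = (\<Sum>k\<in>{1, 2, 3, 4, 5}. g k * cnt k)"
      unfolding cnt_def by (rule sum_by_values) (use vals in auto)
    also have "\<dots> = g 1 * cnt 1 + g 2 * cnt 2 + g 3 * cnt 3 + g 4 * cnt 4 + g 5 * cnt 5"
      by (simp add: add.assoc)
    finally show ?thesis .
  qed
  have e1: "cnt 1 + cnt 2 + cnt 3 + cnt 4 + cnt 5 = 2*p+q+2"
    using grp[of "\<lambda>_. 1"] unfolding N_def by simp
  have e2: "cnt 1 + 2*cnt 2 + 3*cnt 3 + 4*cnt 4 + 5*cnt 5 = 18"
    using grp[of "\<lambda>k. k"] s1' D_eq_5 pq by simp
  have e3: "cnt 1 + 4*cnt 2 + 9*cnt 3 + 16*cnt 4 + 25*cnt 5 = 58 + 2*q"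
    using grp[of "\<lambda>k. k^2"] s2' D_eq_5 pq by simp
  define X where "X = {i\<in>{..<N}. f i \<in> {4,5}}"
  have X: "X \<subseteq> {..<N}" unfolding X_def by auto
  have Xs: "(\<Sum>i\<in>X. f i) = 4 * cnt 4 + 5 * cnt 5"
  proof -
    have "(\<Sum>i\<in>X. f i) = (\<Sum>k\<in>{4,5}. k * card {i\<in>X. f i = k})"
      by (rule sum_by_values) (auto simp: X_def)
    moreover have "{i\<in>X. f i = 4} = {i\<in>{..<N}. f i = 4}" unfolding X_def by auto
    moreover have "{i\<in>X. f i = 5} = {i\<in>{..<N}. f i = 5}" unfolding X_def by auto
    ultimately show ?thesis unfolding cnt_def by simp
  qed
  have Xc: "card X = cnt 4 + cnt 5"
  proof -
    have "X = {i\<in>{..<N}. f i = 4} \<union> {i\<in>{..<N}. f i = 5}" unfolding X_def by auto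
    then show ?thesis unfolding cnt_def by (simp add: card_Un_disjoint) (subst card_Un_disjoint; auto)
  qed
  have egX: "2 * (4 * cnt 4 + 5 * cnt 5) \<le> (cnt 4 + cnt 5) * (cnt 4 + cnt 5 - 1) + 18"
    using edge_bound[OF X[unfolded N_def]] Xs Xc s1' D_eq_5 pq unfolding defs by simp
  have r: "cnt 5 = 2 \<and> cnt 4 = 0 \<and> cnt 3 = 0 \<and> cnt 2 = q \<and> cnt 1 = 2*p"
    by (rule degree_counts_from_moments_D5[OF pq q e1 e2 e3 egX])
  have "\<forall>i<N. f i = 1 \<or> f i = 2 \<or> f i = D"
  proof (intro allI impI)
    fix i assume i: "i < N"
    have "f i \<noteq> 3 \<and> f i \<noteq> 4"
    proof (rule ccontr)
      assume "\<not> (f i \<noteq> 3 \<and> f i \<noteq> 4)"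
      then have "{i\<in>{..<N}. f i = 3} \<noteq> {} \<or> {i\<in>{..<N}. f i = 4} \<noteq> {}" using i by auto
      then have "cnt 3 > 0 \<or> cnt 4 > 0" unfolding cnt_def by (auto simp add: card_gt_0_iff)
      then show False using r by simp
    qed
    then show "f i = 1 \<or> f i = 2 \<or> f i = D" using vals i D_eq_5 by auto
  qed
  then show ?thesis using r D_eq_5 unfolding cnt_def N_def D_def by simp
qed

lemma mset_values:
  "mset (map f [0..<2*p+q+2]) = mset ([p+q+1, p+q+1] @ replicate q 2 @ replicate (2*p) 1)"
proof (rule multiset_eqI)
  fix k
  have D4: "p+q+1 \<ge> 4" using q order by linarith
  have counts: "card {i\<in>{..<2*p+q+2}. f i = p+q+1} = 2 \<and> card {i\<in>{..<2*p+q+2}. f i = 2} = q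
    \<and> card {i\<in>{..<2*p+q+2}. f i = 1} = 2*p \<and> (\<forall>i<2*p+q+2. f i = 1 \<or> f i = 2 \<or> f i = p+q+1)"
    using value_counts_D_ne_5 value_counts_D_eq_5 by (cases "p+q+1 = 5") simp_all
  have "count (mset (map f [0..<2*p+q+2])) k = card {i\<in>{..<2*p+q+2}. f i = k}"
    by (rule count_mset_map_upt)
  also have "\<dots> = (if k = p+q+1 then 2 else if k = 2 then q else if k = 1 then 2*p else 0)"
  proof (cases "k = p+q+1 \<or> k = 2 \<or> k = 1")
    case True
    then show ?thesis using counts D4 by auto
  next
    case False
    then have "{i\<in>{..<2*p+q+2}. f i = k} = {}" using counts by auto
    then show ?thesis using False by simp
  qed
  also have "\<dots> = count (mset ([p+q+1, p+q+1] @ replicate q 2 @ replicate (2*p) 1)) k"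
    using D4 by auto
  finally show "count (mset (map f [0..<2*p+q+2])) k
      = count (mset ([p+q+1, p+q+1] @ replicate q 2 @ replicate (2*p) 1)) k" .
qed

end
section \<open>Graphs cospectral with B'(p,q,p)\<close>

lemma cospectral_degree_moments:
  assumes sg: "simple_graph n E" and sg': "simple_graph n E'"
    and spec: "lap_spectrum n E = lap_spectrum n E'"
  shows "(\<Sum>i<n. degree n E i) = (\<Sum>i<n. degree n E' i)"
    and "(\<Sum>i<n. (degree n E i)^2) = (\<Sum>i<n. (degree n E' i)^2)"
proof -
  have sum: "(\<Sum>i<n. real (degree n E i)) = (\<Sum>i<n. real (degree n E' i))"
    using sum_lap_spectrum[OF sg] sum_lap_spectrum[OF sg'] spec by simp
  then show "(\<Sum>i<n. degree n E i) = (\<Sum>i<n. degree n E' i)"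
    by (simp only: of_nat_sum[symmetric] of_nat_eq_iff)
  have "(\<Sum>i<n. (real (degree n E i))^2 + real (degree n E i))
      = (\<Sum>i<n. (real (degree n E' i))^2 + real (degree n E' i))"
    using sum_squares_lap_spectrum[OF sg] sum_squares_lap_spectrum[OF sg'] spec by simp
  then have "(\<Sum>i<n. (real (degree n E i))^2) = (\<Sum>i<n. (real (degree n E' i))^2)"
    using sum by (simp add: sum.distrib)
  then show "(\<Sum>i<n. (degree n E i)^2) = (\<Sum>i<n. (degree n E' i)^2)"
    by (simp only: of_nat_power[symmetric] of_nat_sum[symmetric] of_nat_eq_iff)
qed

lemma degree_sequence_eqI:
  assumes "mset (map (degree n E) [0..<n]) = mset L" and "sorted (rev L)"
  shows "degree_sequence n E = L"
proof -
  have "sort (map (degree n E) [0..<n]) = rev L"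
    using assms by (intro properties_for_sort) simp_all
  then show ?thesis unfolding degree_sequence_def by simp
qed

lemma B'_cospectral_degree_constraints:
  assumes q: "1 \<le> q" and order: "6 \<le> 2*p+q+2"
    and sg: "simple_graph (2*p+q+2) E"
    and spec: "lap_spectrum (2*p+q+2) E = lap_spectrum (2*p+q+2) (B' p q)"
  shows "B'_degree_constraints p q (degree (2*p+q+2) E) (spectral_excess (real (p+q+1)) (real q))"
proof -
  let ?N = "2*p+q+2"
  define D t where "D = real (p+q+1)" and "t = spectral_excess D (real q)"
  have t_pos: "0 < t" unfolding t_def D_def by (rule spectral_excess_pos) (use q in auto)
  have "4 \<le> p+q+1" using q order by linarith
  then have D4: "4 \<le> D" unfolding D_def by simp
  have bounds: "\<mu> \<le> 2 \<or> (D + t \<le> \<mu> \<and> \<mu> < D + 2)" if "\<mu> \<in># lap_spectrum ?N E" for \<mu>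
    using B'_lap_eigenvalue_bounds[OF q that[unfolded spec]] unfolding D_def t_def by simp
  have lower: "1 \<le> degree ?N E i" if i: "i < ?N" for i
  proof (rule ccontr)
    assume "\<not> 1 \<le> degree ?N E i"
    then have "degree ?N E i = 0" by simp
    from isolated_vertex_lap_zero_multiplicity[OF sg i _ _ this, of "if i = 0 then 1 else 0"]
    have "2 \<le> count (lap_spectrum ?N E) 0" by simp
    with B'_lap_zero_simple[of p q] spec show False by simp
  qed
  show ?thesis
  proof (unfold_locales)
    show "1 \<le> q" "6 \<le> 2*p+q+2" by fact+
    show "1 \<le> degree ?N E i" if "i < ?N" for i using lower[OF that] .
    show "degree ?N E i \<le> p+q+1" if i: "i < ?N" for i
    proof -
      obtain \<mu> where "\<mu> \<in># lap_spectrum ?N E" and "real (degree ?N E i) + 1 \<le> \<mu>"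
        using lap_eigenvalue_ge_degree_plus_one[OF sg i lower[OF i]] by blast
      then show ?thesis using bounds D4 unfolding D_def by fastforce
    qed
    show "(real (degree ?N E i) - 2) * (real (p+q+1) + spectral_excess (real (p+q+1)) (real q)
        - real (degree ?N E i)) \<le> real (degree ?N E i)" if i: "i < ?N" for i
      using lap_spectral_gap_degree_bound[OF sg i, of 2 "D + t"] bounds D4 t_pos
      unfolding D_def t_def by fastforce
    show "0 < spectral_excess (real (p+q+1)) (real q)" using t_pos unfolding t_def D_def .
    show "(spectral_excess (real (p+q+1)) (real q))^2
        + (real (p+q+1) - 2) * spectral_excess (real (p+q+1)) (real q) = real q"
      by (rule spectral_excess_eq) simp
    show "(\<Sum>i<?N. degree ?N E i) = 2*(p+q+1) + 2*q + 2*p"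
      "(\<Sum>i<?N. (degree ?N E i)^2) = 2*(p+q+1)^2 + 4*q + 2*p"
      using cospectral_degree_moments[OF sg B'_simple_graph spec] B'_degree_sums by simp_all
    show "2 * (\<Sum>i\<in>X. degree ?N E i) \<le> card X * (card X - 1) + (\<Sum>i<?N. degree ?N E i)"
      if "X \<subseteq> {..<?N}" for X
      by (rule two_mul_degree_sum_le[OF sg that])
  qed
qed

theorem mainTheorem12:
  fixes p q n' :: nat and E' :: "nat \<Rightarrow> nat \<Rightarrow> bool"
  assumes "q \<ge> 1" and "2 * p + q + 2 \<ge> 6"
    and "simple_graph n' E'"
    and "L_cospectral n' E' (2 * p + q + 2) (binary_star'_edge p q p)"
  shows "degree_sequence n' E' = degree_sequence (2 * p + q + 2) (binary_star'_edge p q p)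
       \<and> degree_sequence (2 * p + q + 2) (binary_star'_edge p q p)
           = [p + q + 1, p + q + 1] @ replicate q 2 @ replicate (2 * p) 1"
proof -
  let ?N = "2 * p + q + 2" and ?L = "[p + q + 1, p + q + 1] @ replicate q 2 @ replicate (2 * p) 1"
  have spec: "lap_spectrum n' E' = lap_spectrum ?N (B' p q)"
    using assms(4) unfolding L_cospectral_def .
  have n': "n' = ?N"
    using size_lap_spectrum[OF assms(3)] size_lap_spectrum[OF B'_simple_graph, of p q] spec by simp
  interpret B'_degree_constraints p q "degree ?N E'" "spectral_excess (real (p+q+1)) (real q)"
    using B'_cospectral_degree_constraints[OF assms(1,2)] assms(3) spec unfolding n' by blast
  have sorted: "sorted (rev ?L)" using assms(1) by (auto simp: sorted_append)
  have "degree_sequence ?N E' = ?L" by (rule degree_sequence_eqI[OF mset_values sorted])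
  moreover have "degree_sequence ?N (B' p q) = ?L"
    by (rule degree_sequence_eqI[OF _ sorted]) (simp only: B'_degree_list)
  ultimately show ?thesis unfolding n' by simp
qed

end
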